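(* Let $n,s\in\mathbb{N}_0$ and $P_n\in M_n$. Then for all $x\in\mathbb{R}^d$: if $s$ is even, $H_{s,\mu,P_n}(x)=2^s\,(\tfrac{s}{2})!\,L^{\frac{\mu}{2}+n-1}_{s/2}(|x|^2)\,P_n(x)$; if $s$ is odd, $H_{s,\mu,P_n}(x)=-2^s\,(\tfrac{s-1}{2})!\;x\,L^{\frac{\mu}{2}+n}_{(s-1)/2}(|x|^2)\,P_n(x)$, where $L^\alpha_m(y)=\sum_{j=0}^m\frac{\Gamma(m+\alpha+1)}{j!\,(m-j)!\,\Gamma(j+\alpha+1)}(-y)^j$ is the generalized Laguerre polynomial.
   Context: Let $d\ge 2$. $\mathbb{R}_{0,d}$ is the real Clifford algebra generated by $e_1,\dots,e_d$ with $e_ie_j+e_je_i=-2\delta_{ij}$; vectors $x$ are identified with $\sum_ix_ie_i$, so $x^2=-|x|^2$. $R$ is a root system with reflection group $W$, positive subsystem $R_+$, $\kappa:R\to[0,\infty)$ a $W$-invariant multiplicity function with $\gamma_\kappa=\sum_{\alpha\in R_+}\kappa(\alpha)>0$, $\mu=2\gamma_\kappa+d$. Dunkl operators $T_if(x)=\partial_{x_i}f(x)+\sum_{\alpha\in R_+}\kappa(\alpha)\frac{f(x)-f(\sigma_\alpha x)}{\langle\alpha,x\rangle}\alpha_i$; Dunkl–Dirac operator $D_h=\sum_ie_iT_i$. $M_n$: $\mathbb{C}\otimes\mathbb{R}_{0,d}$-valued homogeneous polynomials of degree $n$ with $D_hP=0$. $D_+f=D_hf-2xf$, and $H_{s,\mu,P_n}=(D_+)^sP_n$.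 *)

theory Defs
  imports "HOL-Analysis.Analysis"
begin

text \<open>Vectors of R^d are functions nat => real whose components i >= d vanish.
 Elements of the complexified Clifford algebra C (x) R_{0,d} are coefficient maps
 on blades e_A (A a subset of {0..<d}), i.e. functions nat set => complex.\<close>

type_synonym vec = "nat \<Rightarrow> real"
type_synonym cl = "nat set \<Rightarrow> complex"

definition inner_d :: "nat \<Rightarrow> vec \<Rightarrow> vec \<Rightarrow> real" where
  "inner_d d a x = (\<Sum>i<d. a i * x i)"

definition normsq_d :: "nat \<Rightarrow> vec \<Rightarrow> real" where
  "normsq_d d x = inner_d d x x"

definition refl_d :: "nat \<Rightarrow> vec \<Rightarrow> vec \<Rightarrow> vec" where
  "refl_d d \<alpha> x = (\<lambda>i. x i - 2 * inner_d d \<alpha> x / inner_d d \<alpha> \<alpha> * \<alpha> i)"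

definition root_system :: "nat \<Rightarrow> vec set \<Rightarrow> bool" where
  "root_system d R \<longleftrightarrow> finite R
     \<and> (\<forall>\<alpha>\<in>R. (\<forall>i\<ge>d. \<alpha> i = 0) \<and> \<alpha> \<noteq> (\<lambda>_. 0))
     \<and> (\<forall>\<alpha>\<in>R. \<forall>c::real. (\<lambda>i. c * \<alpha> i) \<in> R \<longleftrightarrow> c = 1 \<or> c = -1)
     \<and> (\<forall>\<alpha>\<in>R. \<forall>\<beta>\<in>R. refl_d d \<alpha> \<beta> \<in> R)"

definition positive_subsystem :: "nat \<Rightarrow> vec set \<Rightarrow> vec set \<Rightarrow> bool" where
  "positive_subsystem d R Rp \<longleftrightarrow>
     (\<exists>\<beta>. (\<forall>\<alpha>\<in>R. inner_d d \<alpha> \<beta> \<noteq> 0) \<and> Rp = {\<alpha>\<in>R. inner_d d \<alpha> \<beta> > 0})"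

inductive_set refl_group :: "nat \<Rightarrow> vec set \<Rightarrow> (vec \<Rightarrow> vec) set" for d R where
  refl_group_id: "id \<in> refl_group d R"
| refl_group_step: "w \<in> refl_group d R \<Longrightarrow> \<alpha> \<in> R \<Longrightarrow> refl_d d \<alpha> \<circ> w \<in> refl_group d R"

definition multiplicity :: "nat \<Rightarrow> vec set \<Rightarrow> (vec \<Rightarrow> real) \<Rightarrow> bool" where
  "multiplicity d R \<kappa> \<longleftrightarrow> (\<forall>\<alpha>\<in>R. \<kappa> \<alpha> \<ge> 0) \<and> (\<forall>w\<in>refl_group d R. \<forall>\<alpha>\<in>R. \<kappa> (w \<alpha>) = \<kappa> \<alpha>)"

text \<open>Clifford algebra: e_A e_B = (-1)^(inversions + |A inter B|) e_(A symdiff B).\<close>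
definition cl_sign :: "nat set \<Rightarrow> nat set \<Rightarrow> complex" where
  "cl_sign A B = (-1) ^ (card {(a, b). a \<in> A \<and> b \<in> B \<and> b < a} + card (A \<inter> B))"

definition cl_mult :: "nat \<Rightarrow> cl \<Rightarrow> cl \<Rightarrow> cl" where
  "cl_mult d a b = (\<lambda>C. \<Sum>A\<in>Pow {..<d}. \<Sum>B\<in>Pow {..<d}.
      if (A - B) \<union> (B - A) = C then cl_sign A B * a A * b B else 0)"

definition cl_scale :: "real \<Rightarrow> cl \<Rightarrow> cl" where
  "cl_scale c a = (\<lambda>A. complex_of_real c * a A)"

definition cl_gen :: "nat \<Rightarrow> cl" where
  "cl_gen i = (\<lambda>A. if A = {i} then 1 else 0)"

definition cl_vec :: "nat \<Rightarrow> vec \<Rightarrow> cl" where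
  "cl_vec d x = (\<lambda>A. \<Sum>i<d. complex_of_real (x i) * cl_gen i A)"

definition partial_d :: "nat \<Rightarrow> (vec \<Rightarrow> cl) \<Rightarrow> vec \<Rightarrow> cl" where
  "partial_d i f x = (\<lambda>A. vector_derivative (\<lambda>t::real. f (x(i := x i + t)) A) (at 0))"

definition diff_quot :: "nat \<Rightarrow> (vec \<Rightarrow> cl) \<Rightarrow> vec \<Rightarrow> vec \<Rightarrow> cl" where
  "diff_quot d f \<alpha> x =
     (let q = (\<lambda>y. cl_scale (1 / inner_d d \<alpha> y) (\<lambda>A. f y A - f (refl_d d \<alpha> y) A))
      in if inner_d d \<alpha> x \<noteq> 0 then q x
         else (\<lambda>A. Lim (at x within {y. inner_d d \<alpha> y \<noteq> 0}) (\<lambda>y. q y A)))"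

definition dunkl :: "nat \<Rightarrow> vec set \<Rightarrow> (vec \<Rightarrow> real) \<Rightarrow> nat \<Rightarrow> (vec \<Rightarrow> cl) \<Rightarrow> vec \<Rightarrow> cl" where
  "dunkl d Rp \<kappa> i f x = (\<lambda>A. partial_d i f x A
      + (\<Sum>\<alpha>\<in>Rp. complex_of_real (\<kappa> \<alpha> * \<alpha> i) * diff_quot d f \<alpha> x A))"

definition dunkl_dirac :: "nat \<Rightarrow> vec set \<Rightarrow> (vec \<Rightarrow> real) \<Rightarrow> (vec \<Rightarrow> cl) \<Rightarrow> vec \<Rightarrow> cl" where
  "dunkl_dirac d Rp \<kappa> f x = (\<lambda>A. \<Sum>i<d. cl_mult d (cl_gen i) (dunkl d Rp \<kappa> i f x) A)"

definition D_plus :: "nat \<Rightarrow> vec set \<Rightarrow> (vec \<Rightarrow> real) \<Rightarrow> (vec \<Rightarrow> cl) \<Rightarrow> vec \<Rightarrow> cl" where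
  "D_plus d Rp \<kappa> f x = (\<lambda>A. dunkl_dirac d Rp \<kappa> f x A - 2 * cl_mult d (cl_vec d x) (f x) A)"

definition H_fun :: "nat \<Rightarrow> vec set \<Rightarrow> (vec \<Rightarrow> real) \<Rightarrow> nat \<Rightarrow> (vec \<Rightarrow> cl) \<Rightarrow> vec \<Rightarrow> cl" where
  "H_fun d Rp \<kappa> s P = (D_plus d Rp \<kappa> ^^ s) P"

definition multi_idx :: "nat \<Rightarrow> nat \<Rightarrow> (nat \<Rightarrow> nat) set" where
  "multi_idx d n = {\<beta>. (\<forall>i\<ge>d. \<beta> i = 0) \<and> (\<Sum>i<d. \<beta> i) = n}"

definition hom_poly :: "nat \<Rightarrow> nat \<Rightarrow> (vec \<Rightarrow> cl) \<Rightarrow> bool" where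
  "hom_poly d n P \<longleftrightarrow> (\<exists>c :: (nat \<Rightarrow> nat) \<Rightarrow> cl.
      (\<forall>\<beta> A. \<not> A \<subseteq> {..<d} \<longrightarrow> c \<beta> A = 0) \<and>
      P = (\<lambda>x A. \<Sum>\<beta>\<in>multi_idx d n. c \<beta> A * complex_of_real (\<Prod>i<d. x i ^ \<beta> i)))"

definition monogenic :: "nat \<Rightarrow> vec set \<Rightarrow> (vec \<Rightarrow> real) \<Rightarrow> nat \<Rightarrow> (vec \<Rightarrow> cl) \<Rightarrow> bool" where
  "monogenic d Rp \<kappa> n P \<longleftrightarrow> hom_poly d n P \<and>
     (\<forall>x. (\<forall>i\<ge>d. x i = 0) \<longrightarrow> dunkl_dirac d Rp \<kappa> P x = (\<lambda>_. 0))"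

definition laguerre :: "real \<Rightarrow> nat \<Rightarrow> real \<Rightarrow> real" where
  "laguerre a m y = (\<Sum>j\<le>m. Gamma (real m + a + 1)
       / (fact j * fact (m - j) * Gamma (real j + a + 1)) * (- y) ^ j)"

end

theory Submission
  imports Defs "HOL-Computational_Algebra.Polynomial"
begin

(* Write r = |x|^2 and, for a real polynomial p, consider the two families
       p(r) P_n(x)      and      p(r) x P_n(x).
   The operator D_+ = D_h - 2x maps each family into the other: with 2b = d + 2n + 2 gamma,
     D_+ (p(r) P_n)   = (2p' - 2p)(r) x P_n,
     D_+ (p(r) x P_n) = (2rp - 2rp' - 2b p)(r) P_n.
   This rests on three facts: (i) Dunkl operators obey a Leibniz rule with radial
   factors, because r is invariant under reflections; (ii) D_h P_n = 0; and
   (iii) D_h (x P_n) = -2b P_n, which combines the Clifford relations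
   e_i e_j + e_j e_i = -2 delta_ij, Euler's identity for homogeneous polynomials and
   the reflection terms of the Dunkl operators.  Difference quotients are computed from
   explicit continuous quotients K with G(x) - G(sigma x) = <alpha,x> K(x), which also
   settles their value on the reflecting hyperplanes.
   Starting from p = 1, induction on k shows H_{2k} = 2^{2k} k! L^{b-1}_k(r) P_n and
   H_{2k+1} = -2^{2k+1} k! L^b_k(r) x P_n, using the Laguerre identities
   L^b_k = L^{b-1}_k - (L^{b-1}_k)' and (k+1) L^{b-1}_{k+1} = r (L^b_k)' - r L^b_k + b L^b_k. *)


section \<open>The Clifford algebra\<close>

definition cl_supported :: "nat \<Rightarrow> cl \<Rightarrow> bool" where
  "cl_supported d b \<longleftrightarrow> (\<forall>A. \<not> A \<subseteq> {..<d} \<longrightarrow> b A = 0)"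

text \<open>Left multiplication by e_j toggles the index j in a blade.\<close>
definition blade_flip :: "nat set \<Rightarrow> nat \<Rightarrow> nat set" where
  "blade_flip X j = (if j \<in> X then X - {j} else insert j X)"

definition gen_sign :: "nat \<Rightarrow> nat set \<Rightarrow> complex" where
  "gen_sign i B = (-1) ^ (card {b\<in>B. b < i} + (if i \<in> B then 1 else 0))"

abbreviation e_mul :: "nat \<Rightarrow> nat \<Rightarrow> cl \<Rightarrow> cl" where
  "e_mul d i b \<equiv> cl_mult d (cl_gen i) b"

abbreviation v_mul :: "nat \<Rightarrow> vec \<Rightarrow> cl \<Rightarrow> cl" where
  "v_mul d u b \<equiv> cl_mult d (cl_vec d u) b"

lemma blade_flip_flip [simp]: "blade_flip (blade_flip X j) j = X"
  unfolding blade_flip_def by auto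

lemma blade_flip_commute: "blade_flip (blade_flip X i) j = blade_flip (blade_flip X j) i"
  unfolding blade_flip_def by auto

lemma blade_flip_subset: "X \<subseteq> {..<d} \<Longrightarrow> j < d \<Longrightarrow> blade_flip X j \<subseteq> {..<d}"
  unfolding blade_flip_def by auto

lemma cl_sign_gen: "finite B \<Longrightarrow> cl_sign {i} B = gen_sign i B"
proof -
  assume "finite B"
  have "{(a, b). a \<in> {i} \<and> b \<in> B \<and> b < a} = Pair i ` {b\<in>B. b < i}" by auto
  hence "card {(a, b). a \<in> {i} \<and> b \<in> B \<and> b < a} = card {b\<in>B. b < i}"
    by (simp add: card_image inj_on_def)
  moreover have "card ({i} \<inter> B) = (if i \<in> B then 1 else 0)" by auto
  ultimately show ?thesis unfolding cl_sign_def gen_sign_def by simp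
qed

lemma e_mul_apply:
  assumes "i < d"
  shows "e_mul d i b C
    = (if C \<subseteq> {..<d} then gen_sign i (blade_flip C i) * b (blade_flip C i) else 0)"
proof -
  have "e_mul d i b C = (\<Sum>A\<in>Pow {..<d}. if A = {i} then
      (\<Sum>B\<in>Pow {..<d}. if (A - B) \<union> (B - A) = C then cl_sign A B * b B else 0) else 0)"
    unfolding cl_mult_def cl_gen_def
    by (intro sum.cong refl) (simp cong: if_cong)
  also have "\<dots> = (\<Sum>B\<in>Pow {..<d}.
      if ({i} - B) \<union> (B - {i}) = C then cl_sign {i} B * b B else 0)"
    using assms by (simp add: sum.delta)
  also have "\<dots> = (\<Sum>B\<in>Pow {..<d}. if B = blade_flip C i then gen_sign i B * b B else 0)"
  proof -
    have "({i} - B) \<union> (B - {i}) = C \<longleftrightarrow> B = blade_flip C i" for B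
      unfolding blade_flip_def by auto
    thus ?thesis by (intro sum.cong) (auto simp: cl_sign_gen finite_subset[of _ "{..<d}"])
  qed
  also have "\<dots> = (if C \<subseteq> {..<d} then gen_sign i (blade_flip C i) * b (blade_flip C i) else 0)"
  proof -
    have "blade_flip C i \<subseteq> {..<d} \<longleftrightarrow> C \<subseteq> {..<d}"
      using assms unfolding blade_flip_def by auto
    thus ?thesis by (simp add: sum.delta')
  qed
  finally show ?thesis .
qed

lemma e_mul_out_of_range: "\<not> i < d \<Longrightarrow> e_mul d i b A = 0"
  unfolding cl_mult_def cl_gen_def by (auto intro!: sum.neutral)

lemma gen_sign_flip_self: "gen_sign i (blade_flip X i) = - gen_sign i X"
proof -
  have "{b \<in> blade_flip X i. b < i} = {b \<in> X. b < i}" unfolding blade_flip_def by auto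
  moreover have "(i \<in> blade_flip X i) = (i \<notin> X)" unfolding blade_flip_def by auto
  ultimately show ?thesis unfolding gen_sign_def by auto
qed

lemma gen_sign_square: "gen_sign i X * gen_sign i X = 1"
  unfolding gen_sign_def by (simp add: power_add[symmetric] mult_2[symmetric] power_mult)

lemma gen_sign_flip_less:
  assumes "j < i" "finite X"
  shows "gen_sign i (blade_flip X j) = - gen_sign i X"
proof (cases "j \<in> X")
  case True
  have "{b \<in> X. b < i} = insert j {b \<in> X - {j}. b < i}" using True assms by auto
  hence "card {b \<in> X. b < i} = Suc (card {b \<in> X - {j}. b < i})" using assms by simp
  thus ?thesis using True assms unfolding gen_sign_def blade_flip_def by auto
next
  case False
  have "{b \<in> insert j X. b < i} = insert j {b \<in> X. b < i}" using False assms by auto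
  hence "card {b \<in> insert j X. b < i} = Suc (card {b \<in> X. b < i})" using assms False by simp
  thus ?thesis using False assms unfolding gen_sign_def blade_flip_def by auto
qed

lemma gen_sign_flip_greater: "i < j \<Longrightarrow> gen_sign i (blade_flip X j) = gen_sign i X"
proof -
  assume "i < j"
  hence "{b \<in> blade_flip X j. b < i} = {b \<in> X. b < i}" "(i \<in> blade_flip X j) = (i \<in> X)"
    unfolding blade_flip_def by auto
  thus ?thesis unfolding gen_sign_def by simp
qed

lemma e_mul_twice:
  assumes "i < d" "cl_supported d b"
  shows "e_mul d i (e_mul d i b) C = - b C"
proof (cases "C \<subseteq> {..<d}")
  case True
  then have "blade_flip C i \<subseteq> {..<d}" using assms blade_flip_subset by auto
  then show ?thesis
    using True assms by (simp add: e_mul_apply gen_sign_flip_self gen_sign_square)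
next
  case False thus ?thesis using assms by (simp add: e_mul_apply cl_supported_def)
qed

lemma e_mul_anticommute_less:
  assumes "j < i" "i < d"
  shows "e_mul d i (e_mul d j b) C + e_mul d j (e_mul d i b) C = 0"
proof (cases "C \<subseteq> {..<d}")
  case True
  have sub: "blade_flip C i \<subseteq> {..<d}" "blade_flip C j \<subseteq> {..<d}"
    using True assms blade_flip_subset by auto
  hence fin: "finite (blade_flip C i)" "finite (blade_flip C j)" using finite_subset by auto
  have "gen_sign j (blade_flip (blade_flip C i) j) = gen_sign j (blade_flip C j)"
    using assms by (subst blade_flip_commute) (simp add: gen_sign_flip_greater)
  moreover have "gen_sign i (blade_flip (blade_flip C j) i) = - gen_sign i (blade_flip C i)"
    using assms fin by (simp add: blade_flip_commute[of C j i] gen_sign_flip_less)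
  ultimately show ?thesis using True sub assms
    by (simp add: e_mul_apply blade_flip_commute[of C j i])
next
  case False thus ?thesis using assms by (simp add: e_mul_apply)
qed

lemma e_mul_anticommute:
  assumes "i < d" "j < d" "cl_supported d b"
  shows "e_mul d i (e_mul d j b) C + e_mul d j (e_mul d i b) C = (if i = j then - 2 * b C else 0)"
proof -
  consider "i = j" | "j < i" | "i < j" by linarith
  thus ?thesis
  proof cases
    case 1 thus ?thesis using e_mul_twice[OF assms(1,3)] by simp
  next
    case 2 thus ?thesis using e_mul_anticommute_less[OF 2 assms(1)] by simp
  next
    case 3 thus ?thesis using e_mul_anticommute_less[OF 3 assms(2), of b C] by (simp add: add.commute)
  qed
qed

lemma cl_mult_expand:
  "cl_mult d a b C = (\<Sum>A\<in>Pow {..<d}. \<Sum>B\<in>Pow {..<d}.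
     (if (A - B) \<union> (B - A) = C then cl_sign A B else 0) * a A * b B)"
  unfolding cl_mult_def by (intro sum.cong refl) auto

lemma cl_mult_add_right: "cl_mult d a (\<lambda>C. b C + c C) C' = cl_mult d a b C' + cl_mult d a c C'"
  unfolding cl_mult_expand by (simp add: distrib_left sum.distrib)

lemma cl_mult_diff_right: "cl_mult d a (\<lambda>C. b C - c C) C' = cl_mult d a b C' - cl_mult d a c C'"
  unfolding cl_mult_expand by (simp add: right_diff_distrib sum_subtractf)

lemma cl_mult_scale_right: "cl_mult d a (\<lambda>C. k * b C) C' = k * cl_mult d a b C'"
  unfolding cl_mult_expand sum_distrib_left by (intro sum.cong refl) (simp add: mult_ac)

lemma cl_mult_scale_left: "cl_mult d (\<lambda>C. k * a C) b C' = k * cl_mult d a b C'"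
  unfolding cl_mult_expand sum_distrib_left by (intro sum.cong refl) (simp add: mult_ac)

lemma cl_mult_zero_right: "cl_mult d a (\<lambda>C. 0) C' = 0"
  unfolding cl_mult_expand by simp

lemma sum_swap_outer3:
  "(\<Sum>A\<in>X. \<Sum>B\<in>Y. \<Sum>j\<in>J. g A B j) = (\<Sum>j\<in>J. \<Sum>A\<in>X. \<Sum>B\<in>Y. (g A B j :: complex))"
proof -
  have "(\<Sum>A\<in>X. \<Sum>B\<in>Y. \<Sum>j\<in>J. g A B j) = (\<Sum>A\<in>X. \<Sum>j\<in>J. \<Sum>B\<in>Y. g A B j)"
    by (rule sum.cong[OF refl], rule sum.swap)
  also have "\<dots> = (\<Sum>j\<in>J. \<Sum>A\<in>X. \<Sum>B\<in>Y. g A B j)" by (rule sum.swap)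
  finally show ?thesis .
qed

lemma cl_mult_sum_right:
  "cl_mult d a (\<lambda>C. \<Sum>j\<in>J. f j C) C' = (\<Sum>j\<in>J. cl_mult d a (f j) C')"
  unfolding cl_mult_expand sum_distrib_left by (rule sum_swap_outer3)

lemma cl_mult_sum_left:
  "cl_mult d (\<lambda>C. \<Sum>j\<in>J. f j C) b C' = (\<Sum>j\<in>J. cl_mult d (f j) b C')"
  unfolding cl_mult_expand sum_distrib_left sum_distrib_right mult.assoc by (rule sum_swap_outer3)

lemma v_mul_expand: "v_mul d u b C = (\<Sum>i<d. complex_of_real (u i) * e_mul d i b C)"
  unfolding cl_vec_def by (simp add: cl_mult_sum_left cl_mult_scale_left)

lemma v_mul_expand_fun: "v_mul d u b = (\<lambda>C. \<Sum>i<d. complex_of_real (u i) * e_mul d i b C)"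
  by (rule ext) (rule v_mul_expand)

lemma v_mul_scale_vec: "v_mul d (\<lambda>k. a * u k) b C = complex_of_real a * v_mul d u b C"
  by (simp add: v_mul_expand sum_distrib_left mult_ac)

lemma v_mul_diff_vec: "v_mul d u b C - v_mul d v b C = v_mul d (\<lambda>k. u k - v k) b C"
  by (simp add: v_mul_expand sum_subtractf[symmetric] left_diff_distrib)

lemma e_mul_v_mul:
  assumes "i < d" "cl_supported d c"
  shows "e_mul d i (v_mul d y c) C = - v_mul d y (e_mul d i c) C - 2 * complex_of_real (y i) * c C"
proof -
  have "e_mul d i (v_mul d y c) C = (\<Sum>j<d. complex_of_real (y j) * e_mul d i (e_mul d j c) C)"
    by (subst v_mul_expand_fun) (simp add: cl_mult_sum_right cl_mult_scale_right)
  also have "\<dots> = (\<Sum>j<d. complex_of_real (y j)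
      * ((if i = j then - 2 * c C else 0) - e_mul d j (e_mul d i c) C))"
    using e_mul_anticommute[OF assms(1) _ assms(2)] by (intro sum.cong refl) (simp add: eq_diff_eq)
  also have "\<dots> = (\<Sum>j<d. complex_of_real (y j) * (if i = j then - 2 * c C else 0))
       - (\<Sum>j<d. complex_of_real (y j) * e_mul d j (e_mul d i c) C)"
    by (simp add: right_diff_distrib sum_subtractf)
  also have "(\<Sum>j<d. complex_of_real (y j) * (if i = j then - 2 * c C else 0))
      = - 2 * complex_of_real (y i) * c C"
    using assms(1) by (simp add: if_distrib[of "\<lambda>x. _ * x"] sum.delta cong: if_cong)
  finally show ?thesis by (simp only: v_mul_expand[of d y "e_mul d i c" C]) simp
qed

lemma v_mul_anticommute:
  assumes "cl_supported d b"
  shows "v_mul d u (v_mul d v b) C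
     = - v_mul d v (v_mul d u b) C - 2 * complex_of_real (inner_d d u v) * b C"
proof -
  have "v_mul d u (v_mul d v b) C = (\<Sum>i<d. complex_of_real (u i) * e_mul d i (v_mul d v b) C)"
    by (rule v_mul_expand)
  also have "\<dots> = (\<Sum>i<d. - (complex_of_real (u i) * v_mul d v (e_mul d i b) C)
       - complex_of_real (u i * v i) * (2 * b C))"
    by (intro sum.cong refl) (simp add: e_mul_v_mul[OF _ assms] algebra_simps)
  also have "\<dots> = - (\<Sum>i<d. complex_of_real (u i) * v_mul d v (e_mul d i b) C)
       - (\<Sum>i<d. complex_of_real (u i * v i)) * (2 * b C)"
    by (simp only: sum_subtractf sum_negf sum_distrib_right)
  also have "(\<Sum>i<d. complex_of_real (u i) * v_mul d v (e_mul d i b) C) = v_mul d v (v_mul d u b) C"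
    by (simp only: v_mul_expand_fun[of d u b] cl_mult_sum_right cl_mult_scale_right)
  also have "(\<Sum>i<d. complex_of_real (u i * v i)) = complex_of_real (inner_d d u v)"
    unfolding inner_d_def by simp
  finally show ?thesis by (simp add: mult_ac)
qed

lemma v_mul_square:
  assumes "cl_supported d b"
  shows "v_mul d u (v_mul d u b) C = - complex_of_real (normsq_d d u) * b C"
  using v_mul_anticommute[OF assms, of u u C] unfolding normsq_d_def by algebra


section \<open>Reflections\<close>

definition refl_coeff :: "nat \<Rightarrow> vec \<Rightarrow> vec \<Rightarrow> real" where
  "refl_coeff d \<alpha> z = 2 * inner_d d \<alpha> z / inner_d d \<alpha> \<alpha>"

lemma refl_d_apply: "refl_d d \<alpha> z i = z i - refl_coeff d \<alpha> z * \<alpha> i"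
  unfolding refl_d_def refl_coeff_def by simp

lemma inner_d_commute: "inner_d d a b = inner_d d b a"
  unfolding inner_d_def by (simp add: mult.commute)

lemma inner_d_self_pos:
  assumes "\<forall>i\<ge>d. \<alpha> i = 0" "\<alpha> \<noteq> (\<lambda>_. 0)"
  shows "inner_d d \<alpha> \<alpha> > 0"
proof -
  obtain j where j: "\<alpha> j \<noteq> 0" using assms(2) by auto
  hence "j < d" using assms(1) by (meson not_le)
  hence "\<alpha> j * \<alpha> j \<le> (\<Sum>i<d. \<alpha> i * \<alpha> i)" by (intro member_le_sum) auto
  moreover have "0 < \<alpha> j * \<alpha> j" using j not_real_square_gt_zero by blast
  ultimately show ?thesis unfolding inner_d_def by linarith
qed

lemma roots_norm_nonzero:
  "\<forall>\<alpha>\<in>Rp. (\<forall>i\<ge>d. \<alpha> i = 0) \<and> \<alpha> \<noteq> (\<lambda>_. 0) \<Longrightarrow> \<alpha> \<in> Rp \<Longrightarrow> inner_d d \<alpha> \<alpha> \<noteq> 0"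
  using inner_d_self_pos by (metis less_irrefl)

lemma normsq_refl:
  assumes "inner_d d \<alpha> \<alpha> \<noteq> 0"
  shows "normsq_d d (refl_d d \<alpha> z) = normsq_d d z"
proof -
  define c where "c = refl_coeff d \<alpha> z"
  have "normsq_d d (refl_d d \<alpha> z)
      = (\<Sum>i<d. z i * z i - 2 * c * (\<alpha> i * z i) + c * c * (\<alpha> i * \<alpha> i))"
    unfolding normsq_d_def inner_d_def refl_d_apply c_def
    by (intro sum.cong refl) (simp add: algebra_simps)
  also have "\<dots> = normsq_d d z - 2 * c * inner_d d \<alpha> z + c * c * inner_d d \<alpha> \<alpha>"
    unfolding normsq_d_def inner_d_def by (simp add: sum.distrib sum_subtractf sum_distrib_left)
  also have "c * c * inner_d d \<alpha> \<alpha> = 2 * c * inner_d d \<alpha> z"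
    using assms unfolding c_def refl_coeff_def by (simp add: field_simps)
  finally show ?thesis by simp
qed

lemma continuous_on_coordinate [continuous_intros]: "continuous_on S (\<lambda>z::vec. z k)"
  by (rule continuous_on_subset[OF continuous_on_product_coordinates]) simp

lemma continuous_on_inner_d [continuous_intros]: "continuous_on S (\<lambda>z. inner_d d a z)"
  unfolding inner_d_def by (intro continuous_intros)

lemma continuous_on_normsq_d [continuous_intros]: "continuous_on S (\<lambda>z. normsq_d d z)"
  unfolding normsq_d_def inner_d_def by (intro continuous_intros)

lemma continuous_on_refl_d_coordinate [continuous_intros]:
  "continuous_on S (\<lambda>z. refl_d d \<alpha> z k)"
  unfolding refl_d_apply refl_coeff_def divide_inverse by (intro continuous_intros)

lemma continuous_on_refl_d: "continuous_on S (\<lambda>z. refl_d d \<alpha> z)"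
  by (intro continuous_on_coordinatewise_then_product continuous_on_refl_d_coordinate)

text \<open>Restriction of a vector to its first d coordinates; functions built from the first d
  coordinates cannot tell x and proj_d x apart.\<close>
definition proj_d :: "nat \<Rightarrow> vec \<Rightarrow> vec" where
  "proj_d d z = (\<lambda>k. if k < d then z k else 0)"

lemma proj_d_apply: "k < d \<Longrightarrow> proj_d d z k = z k"
  unfolding proj_d_def by simp

lemma inner_d_proj: "inner_d d a (proj_d d z) = inner_d d a z"
  unfolding inner_d_def proj_d_def by (intro sum.cong refl) auto

lemma refl_d_proj: "k < d \<Longrightarrow> refl_d d \<alpha> (proj_d d z) k = refl_d d \<alpha> z k"
  unfolding refl_d_def inner_d_proj by (simp add: proj_d_apply)


section \<open>Homogeneous polynomials and their reflection quotients\<close>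

definition monom_d :: "nat \<Rightarrow> (nat \<Rightarrow> nat) \<Rightarrow> vec \<Rightarrow> real" where
  "monom_d d \<beta> x = (\<Prod>k<d. x k ^ \<beta> k)"

definition hom_poly_of :: "nat \<Rightarrow> nat \<Rightarrow> ((nat \<Rightarrow> nat) \<Rightarrow> cl) \<Rightarrow> vec \<Rightarrow> cl" where
  "hom_poly_of d n c = (\<lambda>x A. \<Sum>\<beta>\<in>multi_idx d n. c \<beta> A * complex_of_real (monom_d d \<beta> x))"

lemma hom_poly_obtain:
  "hom_poly d n P \<Longrightarrow> \<exists>c. (\<forall>\<beta> A. \<not> A \<subseteq> {..<d} \<longrightarrow> c \<beta> A = 0) \<and> P = hom_poly_of d n c"
  unfolding hom_poly_def hom_poly_of_def monom_d_def by blast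

lemma prod_telescope:
  fixes f g :: "nat \<Rightarrow> real"
  shows "(\<Prod>k<m. f k) - (\<Prod>k<m. g k)
       = (\<Sum>k<m. (\<Prod>l<k. f l) * (f k - g k) * (\<Prod>l\<in>{k<..<m}. g l))"
proof (induction m)
  case 0 show ?case by simp
next
  case (Suc m)
  have split: "{k<..<Suc m} = insert m {k<..<m}" if "k < m" for k using that by auto
  have "(\<Sum>k<m. (\<Prod>l<k. f l) * (f k - g k) * (\<Prod>l\<in>{k<..<Suc m}. g l))
      = (\<Sum>k<m. (\<Prod>l<k. f l) * (f k - g k) * (\<Prod>l\<in>{k<..<m}. g l) * g m)"
    by (intro sum.cong refl) (simp add: split mult_ac)
  moreover have "{m<..<Suc m} = {}" by auto
  ultimately have "(\<Sum>k<Suc m. (\<Prod>l<k. f l) * (f k - g k) * (\<Prod>l\<in>{k<..<Suc m}. g l))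
      = ((\<Prod>k<m. f k) - (\<Prod>k<m. g k)) * g m + (\<Prod>l<m. f l) * (f m - g m)"
    using Suc by (simp add: sum_distrib_right)
  thus ?case by (simp add: algebra_simps)
qed

text \<open>The quotient (x^beta - (sigma_alpha x)^beta) / <alpha,x>, up to the factor 2/|alpha|^2;
  it is a polynomial, hence continuous.\<close>
definition monom_refl_quot :: "nat \<Rightarrow> vec \<Rightarrow> (nat \<Rightarrow> nat) \<Rightarrow> vec \<Rightarrow> real" where
  "monom_refl_quot d \<alpha> \<beta> z = (\<Sum>k<d. (\<Prod>l<k. z l ^ \<beta> l)
      * (\<alpha> k * (\<Sum>i<\<beta> k. refl_d d \<alpha> z k ^ (\<beta> k - Suc i) * z k ^ i))
      * (\<Prod>l\<in>{k<..<d}. refl_d d \<alpha> z l ^ \<beta> l))"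

lemma monom_refl_diff:
  "monom_d d \<beta> z - monom_d d \<beta> (refl_d d \<alpha> z) = refl_coeff d \<alpha> z * monom_refl_quot d \<alpha> \<beta> z"
proof -
  have "z k ^ \<beta> k - refl_d d \<alpha> z k ^ \<beta> k
      = refl_coeff d \<alpha> z * (\<alpha> k * (\<Sum>i<\<beta> k. refl_d d \<alpha> z k ^ (\<beta> k - Suc i) * z k ^ i))" for k
    using power_diff_sumr2[of "z k" "\<beta> k" "refl_d d \<alpha> z k"] by (simp add: refl_d_apply mult_ac)
  thus ?thesis
    unfolding monom_d_def prod_telescope monom_refl_quot_def
    by (simp add: sum_distrib_left mult_ac)
qed

lemma continuous_on_monom_refl_quot [continuous_intros]:
  "continuous_on S (\<lambda>z. monom_refl_quot d \<alpha> \<beta> z)"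
  unfolding monom_refl_quot_def by (intro continuous_intros)

definition hom_refl_quot :: "nat \<Rightarrow> nat \<Rightarrow> ((nat \<Rightarrow> nat) \<Rightarrow> cl) \<Rightarrow> vec \<Rightarrow> vec \<Rightarrow> cl" where
  "hom_refl_quot d n c \<alpha> z = (\<lambda>A. \<Sum>\<beta>\<in>multi_idx d n.
      c \<beta> A * complex_of_real (2 / inner_d d \<alpha> \<alpha> * monom_refl_quot d \<alpha> \<beta> z))"

lemma hom_poly_refl_diff:
  assumes "inner_d d \<alpha> \<alpha> \<noteq> 0"
  shows "hom_poly_of d n c z A - hom_poly_of d n c (refl_d d \<alpha> z) A
       = complex_of_real (inner_d d \<alpha> z) * hom_refl_quot d n c \<alpha> z A"
proof -
  have "hom_poly_of d n c z A - hom_poly_of d n c (refl_d d \<alpha> z) A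
     = (\<Sum>\<beta>\<in>multi_idx d n. c \<beta> A * complex_of_real (monom_d d \<beta> z - monom_d d \<beta> (refl_d d \<alpha> z)))"
    unfolding hom_poly_of_def by (simp add: sum_subtractf right_diff_distrib)
  also have "\<dots> = complex_of_real (inner_d d \<alpha> z) * hom_refl_quot d n c \<alpha> z A"
    using assms unfolding hom_refl_quot_def sum_distrib_left
    by (intro sum.cong refl) (simp add: monom_refl_diff refl_coeff_def field_simps)
  finally show ?thesis .
qed

lemma continuous_on_hom_poly_of: "continuous_on S (\<lambda>z. hom_poly_of d n c z A)"
  unfolding hom_poly_of_def monom_d_def by (intro continuous_intros)

lemma continuous_on_hom_refl_quot: "continuous_on S (\<lambda>z. hom_refl_quot d n c \<alpha> z A)"
  unfolding hom_refl_quot_def by (intro continuous_intros)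

definition monom_grad :: "nat \<Rightarrow> (nat \<Rightarrow> nat) \<Rightarrow> vec \<Rightarrow> nat \<Rightarrow> real" where
  "monom_grad d \<beta> y i = real (\<beta> i) * y i ^ (\<beta> i - 1) * (\<Prod>k\<in>{..<d}-{i}. y k ^ \<beta> k)"

lemma monom_d_update:
  "i < d \<Longrightarrow> monom_d d \<beta> (y(i := v)) = v ^ \<beta> i * (\<Prod>k\<in>{..<d}-{i}. y k ^ \<beta> k)"
  unfolding monom_d_def by (subst prod.remove[of _ i]) auto

lemma monom_d_has_derivative:
  assumes "i < d"
  shows "((\<lambda>t. monom_d d \<beta> (y(i := y i + t))) has_real_derivative monom_grad d \<beta> y i) (at 0)"
proof -
  have "((\<lambda>t. (y i + t) ^ \<beta> i * (\<Prod>k\<in>{..<d}-{i}. y k ^ \<beta> k)) has_real_derivative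
      real (\<beta> i) * (y i + 0) ^ (\<beta> i - 1) * 1 * (\<Prod>k\<in>{..<d}-{i}. y k ^ \<beta> k)) (at 0)"
    by (intro derivative_eq_intros) auto
  thus ?thesis using assms by (simp add: monom_d_update monom_grad_def)
qed

lemma monom_euler:
  assumes "\<beta> \<in> multi_idx d n"
  shows "(\<Sum>i<d. y i * monom_grad d \<beta> y i) = real n * monom_d d \<beta> y"
proof -
  have "y i * monom_grad d \<beta> y i = real (\<beta> i) * monom_d d \<beta> y" if "i < d" for i
    using monom_d_update[OF that, of \<beta> y "y i"]
    by (cases "\<beta> i") (simp_all add: monom_grad_def)
  thus ?thesis using assms unfolding multi_idx_def
    by (simp add: sum_distrib_right[symmetric] of_nat_sum[symmetric] del: of_nat_sum)
qed

definition hom_grad :: "nat \<Rightarrow> nat \<Rightarrow> ((nat \<Rightarrow> nat) \<Rightarrow> cl) \<Rightarrow> vec \<Rightarrow> nat \<Rightarrow> cl" where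
  "hom_grad d n c y i = (\<lambda>A. \<Sum>\<beta>\<in>multi_idx d n. c \<beta> A * complex_of_real (monom_grad d \<beta> y i))"

lemma hom_poly_has_derivative:
  assumes "i < d"
  shows "((\<lambda>t. hom_poly_of d n c (y(i := y i + t)) A) has_vector_derivative hom_grad d n c y i A) (at 0)"
  unfolding hom_poly_of_def hom_grad_def
  by (intro has_vector_derivative_sum has_vector_derivative_mult_right
      has_vector_derivative_of_real monom_d_has_derivative[OF assms])

lemma hom_poly_euler:
  "(\<Sum>i<d. complex_of_real (y i) * hom_grad d n c y i A) = of_nat n * hom_poly_of d n c y A"
proof -
  have "(\<Sum>i<d. complex_of_real (y i) * hom_grad d n c y i A)
      = (\<Sum>\<beta>\<in>multi_idx d n. c \<beta> A * complex_of_real (\<Sum>i<d. y i * monom_grad d \<beta> y i))"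
    unfolding hom_grad_def by (simp add: sum_distrib_left sum.swap[of _ "{..<d}"] mult_ac)
  also have "\<dots> = (\<Sum>\<beta>\<in>multi_idx d n. of_nat n * (c \<beta> A * complex_of_real (monom_d d \<beta> y)))"
    by (intro sum.cong refl) (simp add: monom_euler)
  finally show ?thesis unfolding hom_poly_of_def by (simp add: sum_distrib_left)
qed

lemma monom_grad_proj: "i < d \<Longrightarrow> monom_grad d \<beta> (proj_d d y) i = monom_grad d \<beta> y i"
  unfolding monom_grad_def by (auto simp: proj_d_apply intro!: prod.cong)

lemma monom_refl_quot_proj: "monom_refl_quot d \<alpha> \<beta> (proj_d d z) = monom_refl_quot d \<alpha> \<beta> z"
  unfolding monom_refl_quot_def
  by (intro sum.cong refl arg_cong2[where f="(*)"] prod.cong) (auto simp: refl_d_proj proj_d_apply)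

lemma hom_grad_proj: "i < d \<Longrightarrow> hom_grad d n c (proj_d d y) i = hom_grad d n c y i"
  unfolding hom_grad_def by (simp add: monom_grad_proj)

lemma hom_refl_quot_proj: "hom_refl_quot d n c \<alpha> (proj_d d z) = hom_refl_quot d n c \<alpha> z"
  unfolding hom_refl_quot_def by (simp add: monom_refl_quot_proj)

lemma hom_poly_supported:
  "(\<forall>\<beta> A. \<not> A \<subseteq> {..<d} \<longrightarrow> c \<beta> A = 0) \<Longrightarrow> cl_supported d (hom_poly_of d n c z)"
  unfolding cl_supported_def hom_poly_of_def by simp

lemma hom_grad_supported:
  "(\<forall>\<beta> A. \<not> A \<subseteq> {..<d} \<longrightarrow> c \<beta> A = 0) \<Longrightarrow> cl_supported d (hom_grad d n c y i)"
  unfolding cl_supported_def hom_grad_def by simp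

lemma hom_refl_quot_supported:
  "(\<forall>\<beta> A. \<not> A \<subseteq> {..<d} \<longrightarrow> c \<beta> A = 0) \<Longrightarrow> cl_supported d (hom_refl_quot d n c \<alpha> y)"
  unfolding cl_supported_def hom_refl_quot_def by simp


section \<open>Difference quotients\<close>

text \<open>G has reflection quotient K along alpha: G(x) - G(sigma_alpha x) = <alpha,x> K(x)
  with K continuous.  Then K is the Dunkl difference quotient of G, also on the hyperplane.\<close>
definition refl_quot :: "nat \<Rightarrow> vec \<Rightarrow> (vec \<Rightarrow> cl) \<Rightarrow> (vec \<Rightarrow> cl) \<Rightarrow> bool" where
  "refl_quot d \<alpha> G K \<longleftrightarrow>
     (\<forall>z A. G z A - G (refl_d d \<alpha> z) A = complex_of_real (inner_d d \<alpha> z) * K z A)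
     \<and> (\<forall>A. continuous_on UNIV (\<lambda>z. K z A))"

lemma hyperplane_complement_limpt:
  assumes "\<forall>i\<ge>d. \<alpha> i = 0" "\<alpha> \<noteq> (\<lambda>_. 0)" "inner_d d \<alpha> y = 0"
  shows "y islimpt {z. inner_d d \<alpha> z \<noteq> 0}"
proof -
  have pos: "inner_d d \<alpha> \<alpha> > 0" using inner_d_self_pos assms by blast
  define g where "g = (\<lambda>e::real. (\<lambda>k. y k + e * \<alpha> k))"
  have "continuous_on UNIV g" unfolding g_def by (intro continuous_intros)
  hence "((\<lambda>n. g (inverse (real (Suc n)))) \<longlonglongrightarrow> g 0)"
    by (intro isCont_tendsto_compose[OF _ LIMSEQ_inverse_real_of_nat])
      (simp add: continuous_on_eq_continuous_at)
  moreover have "g 0 = y" unfolding g_def by simp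
  moreover have "g (inverse (real (Suc n))) \<in> {z. inner_d d \<alpha> z \<noteq> 0} - {y}" for n
  proof -
    have "inner_d d \<alpha> (g (inverse (real (Suc n))))
        = inner_d d \<alpha> y + inverse (real (Suc n)) * inner_d d \<alpha> \<alpha>"
      unfolding g_def inner_d_def by (simp add: sum.distrib sum_distrib_left algebra_simps)
    hence "inner_d d \<alpha> (g (inverse (real (Suc n)))) \<noteq> 0" using assms(3) pos by simp
    thus ?thesis using assms(3) by auto
  qed
  ultimately show ?thesis unfolding islimpt_sequential by metis
qed

lemma diff_quot_eq:
  assumes "\<forall>i\<ge>d. \<alpha> i = 0" "\<alpha> \<noteq> (\<lambda>_. 0)" and quot: "refl_quot d \<alpha> G K"
  shows "diff_quot d G \<alpha> y = K y"
proof -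
  define q where "q = (\<lambda>y. cl_scale (1 / inner_d d \<alpha> y) (\<lambda>A. G y A - G (refl_d d \<alpha> y) A))"
  have eq: "\<And>z A. G z A - G (refl_d d \<alpha> z) A = complex_of_real (inner_d d \<alpha> z) * K z A"
    and cont: "\<And>A. continuous_on UNIV (\<lambda>z. K z A)"
    using quot unfolding refl_quot_def by blast+
  have qK: "q z = K z" if "inner_d d \<alpha> z \<noteq> 0" for z
    unfolding q_def cl_scale_def eq using that by (simp add: field_simps)
  show ?thesis
  proof (cases "inner_d d \<alpha> y = 0")
    case False
    thus ?thesis unfolding diff_quot_def Let_def q_def[symmetric] using qK by simp
  next
    case True
    let ?F = "at y within {z. inner_d d \<alpha> z \<noteq> 0}"
    have "Lim ?F (\<lambda>z. q z A) = K y A" for A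
    proof (rule tendsto_Lim)
      show "\<not> trivial_limit ?F"
        using hyperplane_complement_limpt[OF assms(1,2) True] by (simp add: trivial_limit_within)
      have "isCont (\<lambda>z. K z A) y"
        using cont[of A] by (simp add: continuous_on_eq_continuous_at)
      hence "((\<lambda>z. K z A) \<longlongrightarrow> K y A) ?F"
        unfolding isCont_def by (rule tendsto_within_subset) simp
      moreover have "eventually (\<lambda>z. K z A = q z A) ?F"
        unfolding eventually_at_filter using qK by (intro always_eventually) auto
      ultimately show "((\<lambda>z. q z A) \<longlongrightarrow> K y A) ?F"
        using tendsto_cong by fastforce
    qed
    thus ?thesis unfolding diff_quot_def Let_def q_def[symmetric] using True by auto
  qed
qed

lemma hom_poly_refl_quot:
  "inner_d d \<alpha> \<alpha> \<noteq> 0 \<Longrightarrow> refl_quot d \<alpha> (hom_poly_of d n c) (hom_refl_quot d n c \<alpha>)"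
  unfolding refl_quot_def using hom_poly_refl_diff continuous_on_hom_refl_quot by blast

text \<open>The reflection quotient of x P(x), from
  x P(x) - sigma x P(sigma x) = x (P(x) - P(sigma x)) + (x - sigma x) P(sigma x).\<close>
definition vec_hom_refl_quot :: "nat \<Rightarrow> nat \<Rightarrow> ((nat \<Rightarrow> nat) \<Rightarrow> cl) \<Rightarrow> vec \<Rightarrow> vec \<Rightarrow> cl" where
  "vec_hom_refl_quot d n c \<alpha> z = (\<lambda>A. v_mul d z (hom_refl_quot d n c \<alpha> z) A
      + complex_of_real (2 / inner_d d \<alpha> \<alpha>) * v_mul d \<alpha> (hom_poly_of d n c (refl_d d \<alpha> z)) A)"

lemma continuous_on_e_mul [continuous_intros]:
  assumes "\<And>B. continuous_on S (\<lambda>z. g z B)"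
  shows "continuous_on S (\<lambda>z. e_mul d j (g z) A)"
proof (cases "j < d")
  case True thus ?thesis
    by (cases "A \<subseteq> {..<d}") (simp_all add: e_mul_apply, intro continuous_intros assms)
qed (simp add: e_mul_out_of_range)

lemma vec_hom_poly_refl_quot:
  assumes ia: "inner_d d \<alpha> \<alpha> \<noteq> 0"
  shows "refl_quot d \<alpha> (\<lambda>y. v_mul d y (hom_poly_of d n c y)) (vec_hom_refl_quot d n c \<alpha>)"
  unfolding refl_quot_def
proof (intro allI conjI)
  fix z A
  let ?P = "hom_poly_of d n c" and ?Q = "hom_refl_quot d n c \<alpha>"
  define s where "s = refl_d d \<alpha> z"
  have "v_mul d z (?P z) A - v_mul d s (?P s) A
      = v_mul d z (\<lambda>B. ?P z B - ?P s B) A + (v_mul d z (?P s) A - v_mul d s (?P s) A)"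
    by (simp add: cl_mult_diff_right)
  also have "v_mul d z (\<lambda>B. ?P z B - ?P s B) A = complex_of_real (inner_d d \<alpha> z) * v_mul d z (?Q z) A"
    unfolding s_def hom_poly_refl_diff[OF ia] by (rule cl_mult_scale_right)
  also have "v_mul d z (?P s) A - v_mul d s (?P s) A = v_mul d (\<lambda>k. refl_coeff d \<alpha> z * \<alpha> k) (?P s) A"
    unfolding v_mul_diff_vec s_def refl_d_apply by simp
  also have "\<dots> = complex_of_real (inner_d d \<alpha> z)
      * (complex_of_real (2 / inner_d d \<alpha> \<alpha>) * v_mul d \<alpha> (?P s) A)"
    unfolding v_mul_scale_vec refl_coeff_def by simp
  finally show "v_mul d z (?P z) A - v_mul d (refl_d d \<alpha> z) (?P (refl_d d \<alpha> z)) A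
      = complex_of_real (inner_d d \<alpha> z) * vec_hom_refl_quot d n c \<alpha> z A"
    unfolding vec_hom_refl_quot_def s_def by (simp add: distrib_left)
next
  fix A
  have "continuous_on UNIV (\<lambda>z. hom_poly_of d n c (refl_d d \<alpha> z) B)" for B
    by (rule continuous_on_compose2[OF continuous_on_hom_poly_of continuous_on_refl_d]) auto
  thus "continuous_on UNIV (\<lambda>z. vec_hom_refl_quot d n c \<alpha> z A)"
    unfolding vec_hom_refl_quot_def v_mul_expand
    by (intro continuous_intros continuous_on_hom_refl_quot)
qed


section \<open>Dunkl operators on radial multiples\<close>

lemma normsq_d_update: "i < d \<Longrightarrow> normsq_d d (y(i := v)) = normsq_d d y - y i ^ 2 + v ^ 2"
  unfolding normsq_d_def inner_d_def by (simp add: sum.remove[of "{..<d}" i] power2_eq_square)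

lemma normsq_d_has_derivative:
  assumes "i < d"
  shows "((\<lambda>t. normsq_d d (y(i := y i + t))) has_real_derivative 2 * y i) (at 0)"
proof -
  have "((\<lambda>t. normsq_d d y - y i ^ 2 + (y i + t) ^ 2) has_real_derivative 2 * y i) (at 0)"
    by (auto intro!: derivative_eq_intros)
  thus ?thesis by (simp add: normsq_d_update[OF assms])
qed

lemma e_mul_has_derivative:
  assumes "\<And>B. ((\<lambda>t. g t B) has_vector_derivative g' B) F"
  shows "((\<lambda>t. e_mul d j (g t) A) has_vector_derivative e_mul d j g' A) F"
proof (cases "j < d")
  case True thus ?thesis
    by (cases "A \<subseteq> {..<d}") (simp_all add: e_mul_apply, intro derivative_intros assms)
qed (simp add: e_mul_out_of_range)

lemma v_mul_has_derivative:
  assumes "i < d" "\<And>B. ((\<lambda>t. g t B) has_vector_derivative g' B) (at 0)"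
  shows "((\<lambda>t. v_mul d (y(i := y i + t)) (g t) A) has_vector_derivative
      e_mul d i (g 0) A + v_mul d y g' A) (at 0)"
proof -
  have "((\<lambda>t. complex_of_real ((y(i := y i + t)) j) * e_mul d j (g t) A) has_vector_derivative
      complex_of_real (y j) * e_mul d j g' A + (if j = i then e_mul d j (g 0) A else 0)) (at 0)" for j
  proof (cases "j = i")
    case True
    have "((\<lambda>t. complex_of_real (y i + t) * e_mul d j (g t) A) has_vector_derivative
        complex_of_real (y i + 0) * e_mul d j g' A + complex_of_real 1 * e_mul d j (g 0) A) (at 0)"
      by (intro has_vector_derivative_mult has_vector_derivative_of_real e_mul_has_derivative
          assms(2) derivative_eq_intros) auto
    thus ?thesis using True by simp
  next
    case False
    thus ?thesis
      by (simp, intro has_vector_derivative_mult_right e_mul_has_derivative assms(2))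
  qed
  hence "((\<lambda>t. v_mul d (y(i := y i + t)) (g t) A)
      has_vector_derivative (\<Sum>j<d. complex_of_real (y j) * e_mul d j g' A
        + (if j = i then e_mul d j (g 0) A else 0))) (at 0)"
    unfolding v_mul_expand by (intro has_vector_derivative_sum)
  moreover have "(\<Sum>j<d. complex_of_real (y j) * e_mul d j g' A
        + (if j = i then e_mul d j (g 0) A else 0)) = e_mul d i (g 0) A + v_mul d y g' A"
    using assms(1) by (simp add: sum.distrib v_mul_expand)
  ultimately show ?thesis by metis
qed

definition radial_mul :: "nat \<Rightarrow> real poly \<Rightarrow> (vec \<Rightarrow> cl) \<Rightarrow> vec \<Rightarrow> cl" where
  "radial_mul d p G = (\<lambda>y. cl_scale (poly p (normsq_d d y)) (G y))"

lemma radial_mul_has_derivative: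
  assumes "i < d" "((\<lambda>t. G (y(i := y i + t)) A) has_vector_derivative G' A) (at 0)"
  shows "((\<lambda>t. radial_mul d p G (y(i := y i + t)) A) has_vector_derivative
      complex_of_real (2 * poly (pderiv p) (normsq_d d y) * y i) * G y A
      + complex_of_real (poly p (normsq_d d y)) * G' A) (at 0)"
proof -
  have "((\<lambda>t. poly p (normsq_d d (y(i := y i + t)))) has_real_derivative
      poly (pderiv p) (normsq_d d y) * (2 * y i)) (at 0)"
    using DERIV_chain2[OF poly_DERIV normsq_d_has_derivative[OF assms(1)]] by simp
  from has_vector_derivative_mult[OF has_vector_derivative_of_real[OF this] assms(2)]
  show ?thesis unfolding radial_mul_def cl_scale_def by (simp add: algebra_simps)
qed

text \<open>Radial factors pass through reflection quotients, since |sigma x| = |x|.\<close>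
lemma refl_quot_radial_mul:
  assumes ia: "inner_d d \<alpha> \<alpha> \<noteq> 0" and quot: "refl_quot d \<alpha> G K"
  shows "refl_quot d \<alpha> (radial_mul d p G) (radial_mul d p K)"
  unfolding refl_quot_def
proof (intro allI conjI)
  fix z A
  have "radial_mul d p G z A - radial_mul d p G (refl_d d \<alpha> z) A
      = complex_of_real (poly p (normsq_d d z)) * (G z A - G (refl_d d \<alpha> z) A)"
    unfolding radial_mul_def cl_scale_def normsq_refl[OF ia] by (simp add: right_diff_distrib)
  thus "radial_mul d p G z A - radial_mul d p G (refl_d d \<alpha> z) A
      = complex_of_real (inner_d d \<alpha> z) * radial_mul d p K z A"
    using quot unfolding refl_quot_def radial_mul_def cl_scale_def by (simp add: mult_ac)
next
  fix A
  show "continuous_on UNIV (\<lambda>z. radial_mul d p K z A)"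
    using quot unfolding refl_quot_def radial_mul_def cl_scale_def by (intro continuous_intros) auto
qed

lemma dunkl_eq:
  assumes roots: "\<forall>\<alpha>\<in>Rp. (\<forall>i\<ge>d. \<alpha> i = 0) \<and> \<alpha> \<noteq> (\<lambda>_. 0)"
    and deriv: "\<And>A. ((\<lambda>t. G (y(i := y i + t)) A) has_vector_derivative G' A) (at 0)"
    and quot: "\<And>\<alpha>. \<alpha> \<in> Rp \<Longrightarrow> refl_quot d \<alpha> G (K \<alpha>)"
  shows "dunkl d Rp \<kappa> i G y A = G' A + (\<Sum>\<alpha>\<in>Rp. complex_of_real (\<kappa> \<alpha> * \<alpha> i) * K \<alpha> y A)"
proof -
  have "diff_quot d G \<alpha> y = K \<alpha> y" if "\<alpha> \<in> Rp" for \<alpha>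
    using roots that by (intro diff_quot_eq quot) auto
  thus ?thesis unfolding dunkl_def partial_d_def vector_derivative_at[OF deriv] by simp
qed

lemma dunkl_radial_mul:
  assumes "i < d" and roots: "\<forall>\<alpha>\<in>Rp. (\<forall>i\<ge>d. \<alpha> i = 0) \<and> \<alpha> \<noteq> (\<lambda>_. 0)"
    and deriv: "\<And>A. ((\<lambda>t. G (y(i := y i + t)) A) has_vector_derivative G' A) (at 0)"
    and quot: "\<And>\<alpha>. \<alpha> \<in> Rp \<Longrightarrow> refl_quot d \<alpha> G (K \<alpha>)"
  shows "dunkl d Rp \<kappa> i (radial_mul d p G) y A
      = complex_of_real (2 * poly (pderiv p) (normsq_d d y) * y i) * G y A
        + complex_of_real (poly p (normsq_d d y)) * dunkl d Rp \<kappa> i G y A"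
proof -
  have "refl_quot d \<alpha> (radial_mul d p G) (radial_mul d p (K \<alpha>))" if "\<alpha> \<in> Rp" for \<alpha>
    using roots_norm_nonzero[OF roots that] by (intro refl_quot_radial_mul quot[OF that])
  hence "dunkl d Rp \<kappa> i (radial_mul d p G) y A
      = complex_of_real (2 * poly (pderiv p) (normsq_d d y) * y i) * G y A
        + complex_of_real (poly p (normsq_d d y)) * G' A
        + (\<Sum>\<alpha>\<in>Rp. complex_of_real (\<kappa> \<alpha> * \<alpha> i) * radial_mul d p (K \<alpha>) y A)"
    by (intro dunkl_eq[OF roots radial_mul_has_derivative[OF assms(1) deriv]])
  moreover have "dunkl d Rp \<kappa> i G y A = G' A + (\<Sum>\<alpha>\<in>Rp. complex_of_real (\<kappa> \<alpha> * \<alpha> i) * K \<alpha> y A)"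
    by (rule dunkl_eq[OF roots deriv quot])
  ultimately show ?thesis
    unfolding radial_mul_def cl_scale_def by (simp add: algebra_simps sum_distrib_left)
qed

lemma dunkl_dirac_radial_mul:
  assumes roots: "\<forall>\<alpha>\<in>Rp. (\<forall>i\<ge>d. \<alpha> i = 0) \<and> \<alpha> \<noteq> (\<lambda>_. 0)"
    and deriv: "\<And>i A. i < d \<Longrightarrow> ((\<lambda>t. G (y(i := y i + t)) A) has_vector_derivative G' i A) (at 0)"
    and quot: "\<And>\<alpha>. \<alpha> \<in> Rp \<Longrightarrow> refl_quot d \<alpha> G (K \<alpha>)"
  shows "dunkl_dirac d Rp \<kappa> (radial_mul d p G) y C
     = complex_of_real (2 * poly (pderiv p) (normsq_d d y)) * v_mul d y (G y) C
       + complex_of_real (poly p (normsq_d d y)) * dunkl_dirac d Rp \<kappa> G y C"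
proof -
  have "e_mul d i (dunkl d Rp \<kappa> i (radial_mul d p G) y) C
      = complex_of_real (2 * poly (pderiv p) (normsq_d d y)) * (complex_of_real (y i) * e_mul d i (G y) C)
        + complex_of_real (poly p (normsq_d d y)) * e_mul d i (dunkl d Rp \<kappa> i G y) C"
    if "i < d" for i
  proof -
    have "dunkl d Rp \<kappa> i (radial_mul d p G) y
        = (\<lambda>A. complex_of_real (2 * poly (pderiv p) (normsq_d d y) * y i) * G y A
            + complex_of_real (poly p (normsq_d d y)) * dunkl d Rp \<kappa> i G y A)"
      by (rule ext) (rule dunkl_radial_mul[OF that roots deriv[OF that] quot])
    thus ?thesis by (simp only: cl_mult_add_right cl_mult_scale_right) (simp add: mult_ac)
  qed
  hence "dunkl_dirac d Rp \<kappa> (radial_mul d p G) y C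
      = (\<Sum>i<d. complex_of_real (2 * poly (pderiv p) (normsq_d d y)) * (complex_of_real (y i) * e_mul d i (G y) C)
        + complex_of_real (poly p (normsq_d d y)) * e_mul d i (dunkl d Rp \<kappa> i G y) C)"
    unfolding dunkl_dirac_def by (intro sum.cong) auto
  thus ?thesis unfolding dunkl_dirac_def v_mul_expand by (simp add: sum.distrib sum_distrib_left)
qed

lemma sum_roots_e_mul:
  "(\<Sum>i<d. \<Sum>\<alpha>\<in>Rp. complex_of_real (k \<alpha> * \<alpha> i) * e_mul d i (X \<alpha>) C)
    = (\<Sum>\<alpha>\<in>Rp. complex_of_real (k \<alpha>) * v_mul d \<alpha> (X \<alpha>) C)"
  by (subst sum.swap) (simp add: v_mul_expand sum_distrib_left mult_ac)


lemma dunkl_hom_poly: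
  assumes roots: "\<forall>\<alpha>\<in>Rp. (\<forall>i\<ge>d. \<alpha> i = 0) \<and> \<alpha> \<noteq> (\<lambda>_. 0)" and "i < d"
  shows "dunkl d Rp \<kappa> i (hom_poly_of d n c) y A = hom_grad d n c y i A
     + (\<Sum>\<alpha>\<in>Rp. complex_of_real (\<kappa> \<alpha> * \<alpha> i) * hom_refl_quot d n c \<alpha> y A)"
  by (rule dunkl_eq[OF roots hom_poly_has_derivative[OF assms(2)]
        hom_poly_refl_quot[OF roots_norm_nonzero[OF roots]]])

text \<open>T_i P at x depends only on the first d coordinates of x; hence monogenicity on R^d
  extends to every point of the ambient space.\<close>
lemma dunkl_dirac_hom_poly_proj:
  assumes roots: "\<forall>\<alpha>\<in>Rp. (\<forall>i\<ge>d. \<alpha> i = 0) \<and> \<alpha> \<noteq> (\<lambda>_. 0)"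
  shows "dunkl_dirac d Rp \<kappa> (hom_poly_of d n c) (proj_d d y) = dunkl_dirac d Rp \<kappa> (hom_poly_of d n c) y"
proof -
  have "dunkl d Rp \<kappa> i (hom_poly_of d n c) (proj_d d y) = dunkl d Rp \<kappa> i (hom_poly_of d n c) y"
    if "i < d" for i
    by (rule ext) (simp only: dunkl_hom_poly[OF roots that] hom_grad_proj[OF that] hom_refl_quot_proj)
  thus ?thesis unfolding dunkl_dirac_def by (intro ext sum.cong refl) auto
qed

lemma monogenic_everywhere:
  assumes roots: "\<forall>\<alpha>\<in>Rp. (\<forall>i\<ge>d. \<alpha> i = 0) \<and> \<alpha> \<noteq> (\<lambda>_. 0)"
    and mono: "\<forall>x. (\<forall>i\<ge>d. x i = 0) \<longrightarrow> dunkl_dirac d Rp \<kappa> (hom_poly_of d n c) x = (\<lambda>_. 0)"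
  shows "dunkl_dirac d Rp \<kappa> (hom_poly_of d n c) y = (\<lambda>_. 0)"
proof -
  have "\<forall>i\<ge>d. proj_d d y i = 0" unfolding proj_d_def by simp
  thus ?thesis using mono dunkl_dirac_hom_poly_proj[OF roots] by metis
qed


section \<open>The action of D_+ on radial multiples of P and x P\<close>

locale monogenic_poly =
  fixes d n :: nat and c :: "(nat \<Rightarrow> nat) \<Rightarrow> cl" and Rp :: "vec set" and \<kappa> :: "vec \<Rightarrow> real"
  assumes coeff_supported: "\<forall>\<beta> A. \<not> A \<subseteq> {..<d} \<longrightarrow> c \<beta> A = 0"
    and roots: "\<forall>\<alpha>\<in>Rp. (\<forall>i\<ge>d. \<alpha> i = 0) \<and> \<alpha> \<noteq> (\<lambda>_. 0)"
    and monogenic: "\<forall>y. dunkl_dirac d Rp \<kappa> (hom_poly_of d n c) y = (\<lambda>_. 0)"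
begin

abbreviation "P \<equiv> hom_poly_of d n c"
abbreviation "Q \<equiv> hom_refl_quot d n c"
abbreviation "grad \<equiv> hom_grad d n c"
abbreviation "xP \<equiv> (\<lambda>y. v_mul d y (P y))"
abbreviation "\<gamma> \<equiv> (\<Sum>\<alpha>\<in>Rp. \<kappa> \<alpha>)"

lemma root_norm_nonzero: "\<alpha> \<in> Rp \<Longrightarrow> inner_d d \<alpha> \<alpha> \<noteq> 0"
  by (rule roots_norm_nonzero[OF roots])

lemma P_refl_quot: "\<alpha> \<in> Rp \<Longrightarrow> refl_quot d \<alpha> P (Q \<alpha>)"
  by (rule hom_poly_refl_quot[OF root_norm_nonzero])

lemma xP_refl_quot: "\<alpha> \<in> Rp \<Longrightarrow> refl_quot d \<alpha> xP (vec_hom_refl_quot d n c \<alpha>)"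
  by (rule vec_hom_poly_refl_quot[OF root_norm_nonzero])

lemma xP_has_derivative:
  "((\<lambda>t. xP (y(i := y i + t)) A) has_vector_derivative
     e_mul d i (P y) A + v_mul d y (grad y i) A) (at 0)" if "i < d"
proof -
  have "\<And>B. ((\<lambda>t. P (y(i := y i + t)) B) has_vector_derivative grad y i B) (at 0)"
    by (rule hom_poly_has_derivative[OF that])
  from v_mul_has_derivative[OF that this] show ?thesis by simp
qed

lemma dunkl_xP:
  "dunkl d Rp \<kappa> i xP y A = e_mul d i (P y) A + v_mul d y (grad y i) A
     + (\<Sum>\<alpha>\<in>Rp. complex_of_real (\<kappa> \<alpha> * \<alpha> i) * vec_hom_refl_quot d n c \<alpha> y A)"
  if "i < d"
  by (rule dunkl_eq[OF roots xP_has_derivative[OF that] xP_refl_quot])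

lemma monogenic_split:
  "(\<Sum>i<d. e_mul d i (grad y i) C) + (\<Sum>\<alpha>\<in>Rp. complex_of_real (\<kappa> \<alpha>) * v_mul d \<alpha> (Q \<alpha> y) C) = 0"
proof -
  have "e_mul d i (dunkl d Rp \<kappa> i P y) C = e_mul d i (grad y i) C
      + (\<Sum>\<alpha>\<in>Rp. complex_of_real (\<kappa> \<alpha> * \<alpha> i) * e_mul d i (Q \<alpha> y) C)" if "i < d" for i
  proof -
    have "dunkl d Rp \<kappa> i P y = (\<lambda>A. grad y i A + (\<Sum>\<alpha>\<in>Rp. complex_of_real (\<kappa> \<alpha> * \<alpha> i) * Q \<alpha> y A))"
      by (rule ext) (rule dunkl_hom_poly[OF roots that])
    thus ?thesis by (simp add: cl_mult_add_right cl_mult_sum_right cl_mult_scale_right)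
  qed
  hence "dunkl_dirac d Rp \<kappa> P y C = (\<Sum>i<d. e_mul d i (grad y i) C)
      + (\<Sum>i<d. \<Sum>\<alpha>\<in>Rp. complex_of_real (\<kappa> \<alpha> * \<alpha> i) * e_mul d i (Q \<alpha> y) C)"
    unfolding dunkl_dirac_def by (simp add: sum.distrib)
  also have "(\<Sum>i<d. \<Sum>\<alpha>\<in>Rp. complex_of_real (\<kappa> \<alpha> * \<alpha> i) * e_mul d i (Q \<alpha> y) C)
      = (\<Sum>\<alpha>\<in>Rp. complex_of_real (\<kappa> \<alpha>) * v_mul d \<alpha> (Q \<alpha> y) C)"
    by (rule sum_roots_e_mul)
  finally show ?thesis using monogenic by simp
qed

lemma P_supported: "cl_supported d (P y)"
  by (rule hom_poly_supported[OF coeff_supported])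

text \<open>The four contributions to D_h (x P).  First, sum_i e_i e_i = -d.\<close>
lemma sum_e_mul_twice: "(\<Sum>i<d. e_mul d i (e_mul d i (P y)) C) = - of_nat d * P y C"
  using e_mul_twice[OF _ P_supported] by simp

text \<open>Second, sum_i e_i x partial_i P = -x (sum_i e_i partial_i P) - 2 n P, by Euler's identity.\<close>
lemma sum_e_mul_x_grad:
  "(\<Sum>i<d. e_mul d i (v_mul d y (grad y i)) C)
     = - v_mul d y (\<lambda>B. \<Sum>i<d. e_mul d i (grad y i) B) C - 2 * of_nat n * P y C"
proof -
  have "(\<Sum>i<d. e_mul d i (v_mul d y (grad y i)) C)
      = (\<Sum>i<d. - v_mul d y (e_mul d i (grad y i)) C - 2 * (complex_of_real (y i) * grad y i C))"
    by (intro sum.cong refl) (simp add: e_mul_v_mul hom_grad_supported[OF coeff_supported])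
  also have "\<dots> = - (\<Sum>i<d. v_mul d y (e_mul d i (grad y i)) C)
      - 2 * (\<Sum>i<d. complex_of_real (y i) * grad y i C)"
    by (simp add: sum_subtractf sum_negf sum_distrib_left)
  finally show ?thesis by (simp add: hom_poly_euler cl_mult_sum_right)
qed

text \<open>Third, alpha x Q_alpha = -x alpha Q_alpha - 2 <alpha,x> Q_alpha, and <alpha,x> Q_alpha(x)
  = P(x) - P(sigma_alpha x).\<close>
lemma sum_roots_x_quot:
  "(\<Sum>\<alpha>\<in>Rp. complex_of_real (\<kappa> \<alpha>) * v_mul d \<alpha> (v_mul d y (Q \<alpha> y)) C)
     = - v_mul d y (\<lambda>B. \<Sum>\<alpha>\<in>Rp. complex_of_real (\<kappa> \<alpha>) * v_mul d \<alpha> (Q \<alpha> y) B) C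
       - 2 * (\<Sum>\<alpha>\<in>Rp. complex_of_real (\<kappa> \<alpha>) * (P y C - P (refl_d d \<alpha> y) C))"
proof -
  have "complex_of_real (\<kappa> \<alpha>) * v_mul d \<alpha> (v_mul d y (Q \<alpha> y)) C
      = - (complex_of_real (\<kappa> \<alpha>) * v_mul d y (v_mul d \<alpha> (Q \<alpha> y)) C)
        - 2 * (complex_of_real (\<kappa> \<alpha>) * (P y C - P (refl_d d \<alpha> y) C))" if "\<alpha> \<in> Rp" for \<alpha>
    unfolding v_mul_anticommute[OF hom_refl_quot_supported[OF coeff_supported], where u=\<alpha> and v=y]
      hom_poly_refl_diff[OF root_norm_nonzero[OF that]]
    by (simp add: algebra_simps inner_d_commute[of d \<alpha> y])
  hence "(\<Sum>\<alpha>\<in>Rp. complex_of_real (\<kappa> \<alpha>) * v_mul d \<alpha> (v_mul d y (Q \<alpha> y)) C)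
      = - (\<Sum>\<alpha>\<in>Rp. complex_of_real (\<kappa> \<alpha>) * v_mul d y (v_mul d \<alpha> (Q \<alpha> y)) C)
        - 2 * (\<Sum>\<alpha>\<in>Rp. complex_of_real (\<kappa> \<alpha>) * (P y C - P (refl_d d \<alpha> y) C))"
    by (simp add: sum_subtractf sum_negf sum_distrib_left)
  thus ?thesis by (simp add: cl_mult_sum_right cl_mult_scale_right)
qed

text \<open>Fourth, alpha alpha = -|alpha|^2.\<close>
lemma sum_roots_square:
  "(\<Sum>\<alpha>\<in>Rp. complex_of_real (\<kappa> \<alpha> * (2 / inner_d d \<alpha> \<alpha>)) * v_mul d \<alpha> (v_mul d \<alpha> (P (refl_d d \<alpha> y))) C)
     = - 2 * (\<Sum>\<alpha>\<in>Rp. complex_of_real (\<kappa> \<alpha>) * P (refl_d d \<alpha> y) C)"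
proof -
  have "complex_of_real (\<kappa> \<alpha> * (2 / inner_d d \<alpha> \<alpha>)) * v_mul d \<alpha> (v_mul d \<alpha> (P (refl_d d \<alpha> y))) C
      = - 2 * (complex_of_real (\<kappa> \<alpha>) * P (refl_d d \<alpha> y) C)" if "\<alpha> \<in> Rp" for \<alpha>
    using root_norm_nonzero[OF that] unfolding v_mul_square[OF P_supported] normsq_d_def
    by (simp add: field_simps)
  thus ?thesis unfolding sum_distrib_left by (intro sum.cong refl) auto
qed

text \<open>D_h (x P) = sum_i e_i (e_i P + x partial_i P + sum_alpha kappa_alpha alpha_i K_alpha),
  with K_alpha the reflection quotient of x P, regrouped into the four sums above.\<close>
lemma dunkl_dirac_xP_expand:
  "dunkl_dirac d Rp \<kappa> xP y C
     = (\<Sum>i<d. e_mul d i (e_mul d i (P y)) C) + (\<Sum>i<d. e_mul d i (v_mul d y (grad y i)) C)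
       + (\<Sum>\<alpha>\<in>Rp. complex_of_real (\<kappa> \<alpha>) * v_mul d \<alpha> (v_mul d y (Q \<alpha> y)) C)
       + (\<Sum>\<alpha>\<in>Rp. complex_of_real (\<kappa> \<alpha> * (2 / inner_d d \<alpha> \<alpha>))
            * v_mul d \<alpha> (v_mul d \<alpha> (P (refl_d d \<alpha> y))) C)"
proof -
  let ?w = "\<lambda>\<alpha>. complex_of_real (2 / inner_d d \<alpha> \<alpha>)"
  have "e_mul d i (dunkl d Rp \<kappa> i xP y) C
      = e_mul d i (e_mul d i (P y)) C + e_mul d i (v_mul d y (grad y i)) C
        + (\<Sum>\<alpha>\<in>Rp. complex_of_real (\<kappa> \<alpha> * \<alpha> i) * e_mul d i (v_mul d y (Q \<alpha> y)) C)
        + (\<Sum>\<alpha>\<in>Rp. complex_of_real (\<kappa> \<alpha> * (2 / inner_d d \<alpha> \<alpha>) * \<alpha> i)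
            * e_mul d i (v_mul d \<alpha> (P (refl_d d \<alpha> y))) C)" if "i \<in> {..<d}" for i
  proof -
    from that have "i < d" by simp
    have "dunkl d Rp \<kappa> i xP y = (\<lambda>A. e_mul d i (P y) A + v_mul d y (grad y i) A
        + (\<Sum>\<alpha>\<in>Rp. complex_of_real (\<kappa> \<alpha> * \<alpha> i) * vec_hom_refl_quot d n c \<alpha> y A))"
      by (rule ext) (rule dunkl_xP[OF \<open>i < d\<close>])
    hence "e_mul d i (dunkl d Rp \<kappa> i xP y) C
        = e_mul d i (e_mul d i (P y)) C + e_mul d i (v_mul d y (grad y i)) C
          + (\<Sum>\<alpha>\<in>Rp. complex_of_real (\<kappa> \<alpha> * \<alpha> i) * e_mul d i (vec_hom_refl_quot d n c \<alpha> y) C)"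
      by (simp only: cl_mult_add_right cl_mult_sum_right cl_mult_scale_right)
    moreover have "e_mul d i (vec_hom_refl_quot d n c \<alpha> y) C
        = e_mul d i (v_mul d y (Q \<alpha> y)) C + ?w \<alpha> * e_mul d i (v_mul d \<alpha> (P (refl_d d \<alpha> y))) C"
      for \<alpha> unfolding vec_hom_refl_quot_def by (simp only: cl_mult_add_right cl_mult_scale_right)
    ultimately show ?thesis by (simp add: distrib_left sum.distrib mult_ac)
  qed
  hence "dunkl_dirac d Rp \<kappa> xP y C
      = (\<Sum>i<d. e_mul d i (e_mul d i (P y)) C + e_mul d i (v_mul d y (grad y i)) C
        + (\<Sum>\<alpha>\<in>Rp. complex_of_real (\<kappa> \<alpha> * \<alpha> i) * e_mul d i (v_mul d y (Q \<alpha> y)) C)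
        + (\<Sum>\<alpha>\<in>Rp. complex_of_real (\<kappa> \<alpha> * (2 / inner_d d \<alpha> \<alpha>) * \<alpha> i)
            * e_mul d i (v_mul d \<alpha> (P (refl_d d \<alpha> y))) C))"
    unfolding dunkl_dirac_def by (rule sum.cong[OF refl])
  thus ?thesis by (simp only: sum.distrib sum_roots_e_mul)
qed

lemma dunkl_dirac_xP:
  "dunkl_dirac d Rp \<kappa> xP y C = - complex_of_real (real d + 2 * real n + 2 * \<gamma>) * P y C"
proof -
  define PP where "PP = P y C"
  define V1 where "V1 = v_mul d y (\<lambda>B. \<Sum>i<d. e_mul d i (grad y i) B) C"
  define V2 where "V2 = v_mul d y (\<lambda>B. \<Sum>\<alpha>\<in>Rp. complex_of_real (\<kappa> \<alpha>) * v_mul d \<alpha> (Q \<alpha> y) B) C"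
  define T where "T = (\<Sum>\<alpha>\<in>Rp. complex_of_real (\<kappa> \<alpha>) * (P y C - P (refl_d d \<alpha> y) C))"
  define S where "S = (\<Sum>\<alpha>\<in>Rp. complex_of_real (\<kappa> \<alpha>) * P (refl_d d \<alpha> y) C)"
  have expand: "dunkl_dirac d Rp \<kappa> xP y C
      = - of_nat d * PP + (- V1 - 2 * of_nat n * PP) + (- V2 - 2 * T) + (- 2 * S)"
    unfolding dunkl_dirac_xP_expand sum_e_mul_twice sum_e_mul_x_grad sum_roots_x_quot
      sum_roots_square PP_def V1_def V2_def T_def S_def ..
  have "V1 + V2 = 0"
    unfolding V1_def V2_def cl_mult_add_right[symmetric] monogenic_split cl_mult_zero_right ..
  hence V2: "V2 = - V1" by (simp add: eq_neg_iff_add_eq_0 add.commute)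
  have T: "T = complex_of_real \<gamma> * PP - S"
    unfolding T_def S_def PP_def by (simp add: right_diff_distrib sum_subtractf sum_distrib_right)
  show ?thesis unfolding expand V2 T PP_def[symmetric] by (simp add: algebra_simps)
qed

lemma D_plus_radial_P:
  "D_plus d Rp \<kappa> (radial_mul d p P) = radial_mul d (smult 2 (pderiv p) - smult 2 p) xP"
proof (intro ext)
  fix y C
  have "dunkl_dirac d Rp \<kappa> (radial_mul d p P) y C
      = complex_of_real (2 * poly (pderiv p) (normsq_d d y)) * v_mul d y (P y) C"
    using dunkl_dirac_radial_mul[OF roots hom_poly_has_derivative P_refl_quot] monogenic by simp
  moreover have "v_mul d y (radial_mul d p P y) C = complex_of_real (poly p (normsq_d d y)) * v_mul d y (P y) C"
    unfolding radial_mul_def cl_scale_def by (rule cl_mult_scale_right)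
  ultimately show "D_plus d Rp \<kappa> (radial_mul d p P) y C
      = radial_mul d (smult 2 (pderiv p) - smult 2 p) xP y C"
    unfolding D_plus_def radial_mul_def cl_scale_def by (simp add: algebra_simps)
qed

lemma D_plus_radial_xP:
  "D_plus d Rp \<kappa> (radial_mul d p xP) = radial_mul d (smult 2 (pCons 0 p)
     - smult 2 (pCons 0 (pderiv p)) - smult (real d + 2 * real n + 2 * \<gamma>) p) P"
proof (intro ext)
  fix y C
  have "dunkl_dirac d Rp \<kappa> (radial_mul d p xP) y C
      = complex_of_real (2 * poly (pderiv p) (normsq_d d y)) * v_mul d y (v_mul d y (P y)) C
        + complex_of_real (poly p (normsq_d d y)) * dunkl_dirac d Rp \<kappa> xP y C"
    by (rule dunkl_dirac_radial_mul[OF roots xP_has_derivative xP_refl_quot])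
  moreover have "v_mul d y (radial_mul d p xP y) C
      = complex_of_real (poly p (normsq_d d y)) * v_mul d y (v_mul d y (P y)) C"
    unfolding radial_mul_def cl_scale_def by (rule cl_mult_scale_right)
  ultimately show "D_plus d Rp \<kappa> (radial_mul d p xP) y C = radial_mul d (smult 2 (pCons 0 p)
      - smult 2 (pCons 0 (pderiv p)) - smult (real d + 2 * real n + 2 * \<gamma>) p) P y C"
    unfolding D_plus_def radial_mul_def cl_scale_def dunkl_dirac_xP v_mul_square[OF P_supported]
    by (simp add: algebra_simps)
qed

end

section \<open>Identities for Laguerre polynomials\<close>

lemma Gamma_plus1_pos: "(z::real) > 0 \<Longrightarrow> Gamma (z + 1) = z * Gamma z"
  by (rule Gamma_plus1) (auto elim!: nonpos_Ints_cases)

text \<open>The j-th coefficient of L^a_k, up to the sign (-1)^j.\<close>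
definition lag_coeff :: "real \<Rightarrow> nat \<Rightarrow> nat \<Rightarrow> real" where
  "lag_coeff a k j = Gamma (real k + a + 1) / (fact j * fact (k - j) * Gamma (real j + a + 1))"

text \<open>Coefficientwise form of L^b_k = L^(b-1)_k - (L^(b-1)_k)'.\<close>
lemma lag_coeff_lower_param:
  assumes b: "b > 0" and jk: "j < k"
  shows "lag_coeff b k j = real (Suc j) * lag_coeff (b - 1) k (Suc j) + lag_coeff (b - 1) k j"
proof -
  define u where "u = (fact j :: real)"
  define v where "v = (fact (k - Suc j) :: real)"
  define G1 where "G1 = Gamma (real j + b)"
  define G2 where "G2 = Gamma (real k + b)"
  have u: "u > 0" "fact (Suc j) = real (Suc j) * u" unfolding u_def by auto
  have v: "v > 0" "(fact (k - j) :: real) = real (k - j) * v"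
    unfolding v_def using jk by (auto simp: fact_reduce[of "k - j"] Suc_diff_Suc)
  have G1: "G1 > 0" "Gamma (real j + b + 1) = (real j + b) * G1"
    unfolding G1_def using b by (auto intro!: Gamma_plus1_pos)
  have G2: "G2 > 0" "Gamma (real k + b + 1) = (real k + b) * G2"
    unfolding G2_def using b by (auto intro!: Gamma_plus1_pos)
  have kj: "real (k - j) = real k - real j" "real (k - Suc j) = real k - real j - 1" using jk by auto
  have e1: "lag_coeff b k j = (real k + b) * G2 / (u * (real (k - j) * v) * ((real j + b) * G1))"
    unfolding lag_coeff_def u_def[symmetric] v(2) G1(2)[symmetric] G2(2)[symmetric] by simp
  have e2: "lag_coeff (b - 1) k (Suc j) = G2 / (real (Suc j) * u * v * ((real j + b) * G1))"
    unfolding lag_coeff_def u(2)[symmetric] v_def[symmetric] G2_def G1(2)[symmetric]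
    by (simp add: algebra_simps)
  have e3: "lag_coeff (b - 1) k j = G2 / (u * (real (k - j) * v) * G1)"
    unfolding lag_coeff_def u_def[symmetric] v(2)[symmetric] G1_def G2_def by (simp add: algebra_simps)
  have pos: "real j + b > 0" "real (k - j) > 0" using b jk by auto
  define W where "W = G2 / (u * v * G1)"
  define t where "t = real (k - j)"
  define s where "s = real j + b"
  have ts: "t + s = real k + b" unfolding t_def s_def using kj by simp
  have nz: "u \<noteq> 0" "v \<noteq> 0" "G1 \<noteq> 0" "t \<noteq> 0" "s \<noteq> 0" "real (Suc j) \<noteq> 0"
    using u v G1 pos unfolding t_def s_def by auto
  have f1: "lag_coeff b k j = W * (t + s) / (t * s)" unfolding e1 W_def ts t_def[symmetric] s_def[symmetric]
    using nz by (simp add: field_simps)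
  have f2: "real (Suc j) * lag_coeff (b - 1) k (Suc j) = W / s" unfolding e2 W_def s_def[symmetric]
    using nz by (simp only: field_simps) simp
  have f3: "lag_coeff (b - 1) k j = W / t" unfolding e3 W_def t_def[symmetric]
    using nz by (simp add: field_simps)
  show ?thesis unfolding f1 f2 f3 using nz by (simp add: field_simps)
qed

lemma lag_coeff_diag: "real k + a + 1 > 0 \<Longrightarrow> lag_coeff a k k = 1 / fact k"
proof -
  assume h: "real k + a + 1 > 0"
  have "Gamma (real k + a + 1) \<noteq> 0" using Gamma_real_pos[OF h] by linarith
  thus ?thesis unfolding lag_coeff_def by simp
qed

text \<open>Coefficientwise form of (k+1) L^(b-1)_(k+1) = y (L^b_k)' - y L^b_k + b L^b_k,
  for the constant, the middle and the leading coefficient.\<close>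
lemma lag_coeff_raise_zero:
  assumes b: "b > 0"
  shows "real (Suc k) * lag_coeff (b - 1) (Suc k) 0 = b * lag_coeff b k 0"
proof -
  define G where "G = Gamma (real k + b + 1)"
  define H where "H = Gamma b"
  have H: "H > 0" "Gamma (b + 1) = b * H" unfolding H_def using b by (auto intro!: Gamma_plus1_pos)
  have "real (Suc k) * lag_coeff (b - 1) (Suc k) 0 = real (Suc k) * G / (fact (Suc k) * H)"
    unfolding lag_coeff_def G_def H_def by (simp add: algebra_simps)
  also have "\<dots> = G / (fact k * H)"
  proof -
    have "(fact (Suc k) :: real) = real (Suc k) * fact k" by simp
    moreover have "(fact k :: real) \<noteq> 0" "real (Suc k) \<noteq> 0" "H \<noteq> 0" using H by auto
    ultimately show ?thesis by (simp only: field_simps) simp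
  qed
  also have "\<dots> = b * lag_coeff b k 0"
    unfolding lag_coeff_def G_def[symmetric] using H b by (simp add: add.commute field_simps)
  finally show ?thesis .
qed

lemma lag_coeff_raise_mid:
  assumes b: "b > 0" and ik: "i < k"
  shows "real (Suc k) * lag_coeff (b - 1) (Suc k) (Suc i) = lag_coeff b k i + (real (Suc i) + b) * lag_coeff b k (Suc i)"
proof -
  define G where "G = Gamma (real k + b + 1)"
  define H where "H = Gamma (real i + b + 1)"
  define u where "u = (fact i :: real)"
  define v where "v = (fact (k - Suc i) :: real)"
  have u: "u > 0" "fact (Suc i) = real (Suc i) * u" unfolding u_def by auto
  have v: "v > 0" "(fact (k - i) :: real) = real (k - i) * v"
    unfolding v_def using ik by (auto simp: fact_reduce[of "k - i"] Suc_diff_Suc)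
  have H: "H > 0" "Gamma (real (Suc i) + b + 1) = (real (Suc i) + b) * H"
  proof -
    have "real (Suc i) + b = real i + b + 1" by simp
    thus "H > 0" "Gamma (real (Suc i) + b + 1) = (real (Suc i) + b) * H"
      unfolding H_def using b Gamma_plus1_pos[of "real i + b + 1"] by auto
  qed
  have e1: "lag_coeff (b - 1) (Suc k) (Suc i) = G / (real (Suc i) * u * (real (k - i) * v) * H)"
    unfolding lag_coeff_def u(2)[symmetric] v(2)[symmetric] G_def H_def by (simp add: algebra_simps)
  have e2: "lag_coeff b k i = G / (u * (real (k - i) * v) * H)"
    unfolding lag_coeff_def u_def[symmetric] v(2)[symmetric] G_def H_def by simp
  have e3: "lag_coeff b k (Suc i) = G / (real (Suc i) * u * v * ((real (Suc i) + b) * H))"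
    unfolding lag_coeff_def u(2)[symmetric] v_def[symmetric] G_def H(2)[symmetric] by (simp add: Suc_diff_Suc)
  define W where "W = G / (u * v * H)"
  define t where "t = real (k - i)"
  define s where "s = real (Suc i)"
  have ts: "t + s = real (Suc k)" unfolding t_def s_def using ik by simp
  have nz: "u \<noteq> 0" "v \<noteq> 0" "H \<noteq> 0" "t \<noteq> 0" "s \<noteq> 0" "real (Suc i) + b \<noteq> 0"
    using u v H ik b unfolding t_def s_def by auto
  have f1: "real (Suc k) * lag_coeff (b - 1) (Suc k) (Suc i) = W * (t + s) / (s * t)"
    unfolding e1 W_def ts[symmetric] t_def[symmetric] s_def[symmetric] using nz by (simp add: field_simps)
  have f2: "lag_coeff b k i = W / t" unfolding e2 W_def t_def[symmetric] using nz by (simp add: field_simps)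
  have f3: "(real (Suc i) + b) * lag_coeff b k (Suc i) = W / s" unfolding e3 W_def s_def[symmetric]
    using nz by (simp only: field_simps s_def) simp
  show ?thesis unfolding f1 f2 f3 using nz by (simp add: field_simps)
qed

lemma lag_coeff_raise_top:
  assumes b: "b > 0"
  shows "real (Suc k) * lag_coeff (b - 1) (Suc k) (Suc k) = lag_coeff b k k"
proof -
  have "(fact (Suc k) :: real) = real (Suc k) * fact k" by simp
  moreover have "(fact k :: real) \<noteq> 0" "real (Suc k) \<noteq> 0" by auto
  ultimately show ?thesis using b by (simp add: lag_coeff_diag)
qed

definition laguerre_poly :: "real \<Rightarrow> nat \<Rightarrow> real poly" where
  "laguerre_poly a k = (\<Sum>j\<le>k. monom ((-1) ^ j * lag_coeff a k j) j)"

lemma coeff_laguerre_poly: "coeff (laguerre_poly a k) j = (if j \<le> k then (-1) ^ j * lag_coeff a k j else 0)"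
  unfolding laguerre_poly_def coeff_sum by (simp add: sum.delta)

lemma poly_laguerre_poly: "poly (laguerre_poly a k) y = laguerre a k y"
  unfolding laguerre_poly_def laguerre_def lag_coeff_def poly_sum poly_monom
  by (intro sum.cong refl) (simp add: power_minus[of y])

lemma laguerre_poly_lower_param:
  assumes b: "b > 0"
  shows "laguerre_poly b k = laguerre_poly (b - 1) k - pderiv (laguerre_poly (b - 1) k)"
proof (rule poly_eqI)
  fix j
  show "coeff (laguerre_poly b k) j = coeff (laguerre_poly (b - 1) k - pderiv (laguerre_poly (b - 1) k)) j"
  proof (cases "j < k")
    case True
    thus ?thesis using lag_coeff_lower_param[OF b True] by (simp add: coeff_laguerre_poly coeff_pderiv algebra_simps)
  next
    case False
    show ?thesis
    proof (cases "j = k")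
      case True thus ?thesis using b by (simp add: coeff_laguerre_poly coeff_pderiv lag_coeff_diag)
    next
      case False thus ?thesis using \<open>\<not> j < k\<close> by (simp add: coeff_laguerre_poly coeff_pderiv)
    qed
  qed
qed

lemma laguerre_poly_raise_degree:
  assumes b: "b > 0"
  shows "smult (real (Suc k)) (laguerre_poly (b - 1) (Suc k))
     = pCons 0 (pderiv (laguerre_poly b k)) - pCons 0 (laguerre_poly b k) + smult b (laguerre_poly b k)"
proof (rule poly_eqI)
  fix j
  show "coeff (smult (real (Suc k)) (laguerre_poly (b - 1) (Suc k))) j
     = coeff (pCons 0 (pderiv (laguerre_poly b k)) - pCons 0 (laguerre_poly b k) + smult b (laguerre_poly b k)) j"
  proof (cases j)
    case 0 thus ?thesis using lag_coeff_raise_zero[OF b, of k] by (simp add: coeff_laguerre_poly)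
  next
    case (Suc i)
    consider "i < k" | "i = k" | "i > k" by linarith
    thus ?thesis
    proof cases
      case 1 thus ?thesis using Suc arg_cong[OF lag_coeff_raise_mid[OF b 1], of "\<lambda>x. (-1) ^ Suc i * x"]
        by (simp add: coeff_laguerre_poly coeff_pderiv algebra_simps)
    next
      case 2 thus ?thesis using Suc lag_coeff_raise_top[OF b, of k] by (simp add: coeff_laguerre_poly coeff_pderiv)
    next
      case 3 thus ?thesis using Suc by (simp add: coeff_laguerre_poly coeff_pderiv)
    qed
  qed
qed

text \<open>The radial factors of H_{2k} (times P) and of H_{2k+1} (times x P).\<close>
definition even_radial :: "real \<Rightarrow> nat \<Rightarrow> real poly" where
  "even_radial b k = smult (2 ^ (2 * k) * fact k) (laguerre_poly (b - 1) k)"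
definition odd_radial :: "real \<Rightarrow> nat \<Rightarrow> real poly" where
  "odd_radial b k = smult (- (2 ^ (2 * k + 1) * fact k)) (laguerre_poly b k)"

text \<open>The two steps of the recursion p -> 2p' - 2p and p -> 2yp - 2yp' - 2b p
  of the D_+ action, with 2b = d + 2n + 2 gamma.\<close>
lemma even_radial_step: "b > 0 \<Longrightarrow> smult 2 (pderiv (even_radial b k)) - smult 2 (even_radial b k) = odd_radial b k"
  unfolding even_radial_def odd_radial_def laguerre_poly_lower_param[of b k] by (simp add: pderiv_smult algebra_simps smult_diff_right)

lemma odd_radial_step: "b > 0 \<Longrightarrow> smult 2 (pCons 0 (odd_radial b k)) - smult 2 (pCons 0 (pderiv (odd_radial b k)))
    - smult (2 * b) (odd_radial b k) = even_radial b (Suc k)"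
proof -
  assume b: "b > 0"
  have "even_radial b (Suc k) = smult (2 ^ (2 * k + 2) * fact k) (smult (real (Suc k)) (laguerre_poly (b - 1) (Suc k)))"
    unfolding even_radial_def by (simp add: mult_ac)
  also have "\<dots> = smult (2 ^ (2 * k + 2) * fact k) (pCons 0 (pderiv (laguerre_poly b k)) - pCons 0 (laguerre_poly b k) + smult b (laguerre_poly b k))"
    unfolding laguerre_poly_raise_degree[OF b] ..
  finally show ?thesis unfolding odd_radial_def
    by (simp add: pderiv_smult pderiv_minus smult_diff_right smult_add_right algebra_simps)
qed


section \<open>The Clifford-Hermite polynomials\<close>

context monogenic_poly
begin

lemma H_fun_radial:
  assumes b: "b > 0" and bd: "real d + 2 * real n + 2 * \<gamma> = 2 * b"
  shows "H_fun d Rp \<kappa> (2 * k) P = radial_mul d (even_radial b k) P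
       \<and> H_fun d Rp \<kappa> (Suc (2 * k)) P = radial_mul d (odd_radial b k) xP"
proof (induction k)
  case 0
  have one: "radial_mul d (even_radial b 0) P = P"
    using b by (simp add: even_radial_def laguerre_poly_def lag_coeff_diag radial_mul_def cl_scale_def)
  have even: "H_fun d Rp \<kappa> (2 * 0) P = radial_mul d (even_radial b 0) P"
    unfolding H_fun_def one by simp
  have "H_fun d Rp \<kappa> (Suc (2 * 0)) P = D_plus d Rp \<kappa> (radial_mul d (even_radial b 0) P)"
    unfolding H_fun_def one by simp
  also have "\<dots> = radial_mul d (odd_radial b 0) xP"
    unfolding D_plus_radial_P even_radial_step[OF b] ..
  finally show ?case using even by simp
next
  case (Suc k)
  have "H_fun d Rp \<kappa> (2 * Suc k) P = D_plus d Rp \<kappa> (H_fun d Rp \<kappa> (Suc (2 * k)) P)"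
    unfolding H_fun_def by simp
  also have "\<dots> = radial_mul d (even_radial b (Suc k)) P"
    unfolding Suc.IH[THEN conjunct2] D_plus_radial_xP bd odd_radial_step[OF b, symmetric] ..
  finally have even: "H_fun d Rp \<kappa> (2 * Suc k) P = radial_mul d (even_radial b (Suc k)) P" .
  have "H_fun d Rp \<kappa> (Suc (2 * Suc k)) P = D_plus d Rp \<kappa> (H_fun d Rp \<kappa> (2 * Suc k) P)"
    unfolding H_fun_def by simp
  also have "\<dots> = radial_mul d (odd_radial b (Suc k)) xP"
    unfolding even D_plus_radial_P even_radial_step[OF b] ..
  finally show ?case using even by simp
qed

end

lemma positive_roots_valid:
  assumes "root_system d R" "positive_subsystem d R Rp"
  shows "\<forall>\<alpha>\<in>Rp. (\<forall>i\<ge>d. \<alpha> i = 0) \<and> \<alpha> \<noteq> (\<lambda>_. 0)"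
  using assms unfolding root_system_def positive_subsystem_def by auto

theorem theorem3p3:
  fixes d n s :: nat and R Rp :: "vec set" and \<kappa> :: "vec \<Rightarrow> real"
    and P :: "vec \<Rightarrow> cl" and x :: vec
  assumes "d \<ge> 2"
    and "root_system d R"
    and "positive_subsystem d R Rp"
    and "multiplicity d R \<kappa>"
    and "(\<Sum>\<alpha>\<in>Rp. \<kappa> \<alpha>) > 0"
    and "monogenic d Rp \<kappa> n P"
    and "\<forall>i\<ge>d. x i = 0"
  shows "(even s \<longrightarrow> H_fun d Rp \<kappa> s P x =
            cl_scale (2 ^ s * fact (s div 2)
              * laguerre ((2 * (\<Sum>\<alpha>\<in>Rp. \<kappa> \<alpha>) + real d) / 2 + real n - 1) (s div 2) (normsq_d d x))
              (P x))
       \<and> (odd s \<longrightarrow> H_fun d Rp \<kappa> s P x =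
            cl_scale (- (2 ^ s * fact ((s - 1) div 2)
              * laguerre ((2 * (\<Sum>\<alpha>\<in>Rp. \<kappa> \<alpha>) + real d) / 2 + real n) ((s - 1) div 2) (normsq_d d x)))
              (cl_mult d (cl_vec d x) (P x)))"
proof -
  have roots: "\<forall>\<alpha>\<in>Rp. (\<forall>i\<ge>d. \<alpha> i = 0) \<and> \<alpha> \<noteq> (\<lambda>_. 0)"
    using assms(2,3) by (rule positive_roots_valid)
  obtain c where coeff: "\<forall>\<beta> A. \<not> A \<subseteq> {..<d} \<longrightarrow> c \<beta> A = 0" and P: "P = hom_poly_of d n c"
    using hom_poly_obtain assms(6) unfolding monogenic_def by blast
  have "\<forall>y. dunkl_dirac d Rp \<kappa> (hom_poly_of d n c) y = (\<lambda>_. 0)"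
    using monogenic_everywhere[OF roots] assms(6) unfolding monogenic_def P by blast
  then interpret monogenic_poly d n c Rp \<kappa> using coeff roots by unfold_locales
  define b where "b = (2 * (\<Sum>\<alpha>\<in>Rp. \<kappa> \<alpha>) + real d) / 2 + real n"
  have b: "b > 0" using assms(5) unfolding b_def by (simp add: add_pos_nonneg)
  have bd: "real d + 2 * real n + 2 * (\<Sum>\<alpha>\<in>Rp. \<kappa> \<alpha>) = 2 * b" unfolding b_def by simp
  show ?thesis
  proof (intro conjI impI)
    assume "even s"
    then obtain k where "s = 2 * k" by blast
    thus "H_fun d Rp \<kappa> s P x = cl_scale (2 ^ s * fact (s div 2) * laguerre
        ((2 * (\<Sum>\<alpha>\<in>Rp. \<kappa> \<alpha>) + real d) / 2 + real n - 1) (s div 2) (normsq_d d x)) (P x)"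
      using H_fun_radial[OF b bd, of k]
      unfolding P radial_mul_def even_radial_def b_def by (simp add: poly_laguerre_poly)
  next
    assume "odd s"
    then obtain k where "s = Suc (2 * k)" using oddE by fastforce
    thus "H_fun d Rp \<kappa> s P x = cl_scale (- (2 ^ s * fact ((s - 1) div 2) * laguerre
        ((2 * (\<Sum>\<alpha>\<in>Rp. \<kappa> \<alpha>) + real d) / 2 + real n) ((s - 1) div 2) (normsq_d d x)))
        (cl_mult d (cl_vec d x) (P x))"
      using H_fun_radial[OF b bd, of k]
      unfolding P radial_mul_def odd_radial_def b_def by (simp add: poly_laguerre_poly)
  qed
qed

end
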